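(* Let $f(x,u)=g(x)+h(x)u$ with $g:\mathbb{R}^n\to\mathbb{R}^n$, $h:\mathbb{R}^n\to\mathbb{R}^{n\times m}$ smooth, and let $\mu:\mathbb{R}^n\to\mathbb{R}^m$ be a smooth feedback policy. Fix $t_0<t_f$, an initial state $x(t_0)$, and let $x(t)$, $t\in[t_0,t_f]$, be the nominal trajectory solving $\dot x(t)=f(x(t),\mu(x(t)))$. Fix a time $\tau\in(t_0,t_f)$ and an arbitrary continuous control signal $\mu_\star:[t_0,t_f]\to\mathbb{R}^m$. For $\lambda\ge 0$ small, let $x_\lambda(t)$ be the trajectory from the same initial condition $x(t_0)$ that uses the control $\mu(x)$ on $[t_0,\tau)$, the control $\mu_\star(t)$ on $[\tau,\tau+\lambda)$, and the control $\mu(x)$ on $[\tau+\lambda,t_f]$. Define $$D_{\mathrm{KL}}(\lambda)=-\sum_{i=1}^N p(s_i)\log q_\lambda(s_i),\qquad q_\lambda(s)=\frac{1}{t_f-t_0}\int_{t_0}^{t_f}\psi(s\mid x_\lambda(t))\,dt,$$ and write $q=q_0$ (the time-averaged statistics of the nominal trajectory). Then the sensitivity of $D_{\mathrm{KL}}$ to the switching duration $\lambda$ (evaluated as $\lambda\to 0^+$) is $$\frac{\partial D_{\mathrm{KL}}}{\partial\lambda}=\rho(\tau)^\top\big(f(x(\tau),\mu_\star(\tau))-f(x(\tau),\mu(x(\tau)))\big),$$ where $\rho:[t_0,t_f]\to\mathbb{R}^n$ is the solution of the terminal-value problem $$\dot\rho(t)=\frac{1}{t_f-t_0}\sum_{i=1}^N\frac{p(s_i)}{q(s_i)}\frac{\partial\psi(s_i\mid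 x)}{\partial x}\Big|_{x=x(t)}-\Big(\frac{\partial f}{\partial x}+\frac{\partial f}{\partial u}\frac{\partial\mu}{\partial x}\Big)^\top\rho(t),\qquad \rho(t_f)=\mathbf{0},$$ with the Jacobians evaluated at $(x(t),\mu(x(t)))$.
   Context: The robot state is $x\in\mathbb{R}^n$; a search domain $\mathcal{S}^v$ ($v\le n+m$) is given and $\bar x$ denotes the component of the state lying in the search domain. $p$ is a probability density on $\mathcal{S}^v$ and $s_1,\dots,s_N\in\mathcal{S}^v$ are fixed sample points. $\Sigma\in\mathbb{R}^{v\times v}$ is positive definite, $\eta>0$ a normalization constant, and $\psi(s\mid x)=\frac{1}{\eta}\exp\!\big[-\tfrac12\|s-\bar x\|^2_{\Sigma^{-1}}\big]$, where $\|y\|^2_{A}=y^\top A y$. *)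

theory Defs
  imports "HOL-Analysis.Analysis"
begin

definition grad :: "(real^'n \<Rightarrow> real) \<Rightarrow> real^'n \<Rightarrow> real^'n" where
  "grad F x = (\<chi> i. frechet_derivative F (at x) (axis i 1))"

fun Ck :: "nat \<Rightarrow> (real^'n \<Rightarrow> real) \<Rightarrow> bool" where
  "Ck 0 F = continuous_on UNIV F"
| "Ck (Suc k) F = (continuous_on UNIV F \<and> (\<forall>x. F differentiable (at x)) \<and>
      (\<forall>i. Ck k (\<lambda>x. frechet_derivative F (at x) (axis i 1))))"

definition smooth_scalar :: "(real^'n \<Rightarrow> real) \<Rightarrow> bool" where
  "smooth_scalar F = (\<forall>k. Ck k F)"

definition smooth_vec :: "(real^'n \<Rightarrow> real^'m) \<Rightarrow> bool" where
  "smooth_vec F = (\<forall>j. smooth_scalar (\<lambda>x. F x $ j))"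

definition smooth_mat :: "(real^'n \<Rightarrow> real^'m^'k) \<Rightarrow> bool" where
  "smooth_mat F = (\<forall>i j. smooth_scalar (\<lambda>x. F x $ i $ j))"

definition pos_def :: "real^'v^'v \<Rightarrow> bool" where
  "pos_def S = (transpose S = S \<and> (\<forall>y. y \<noteq> 0 \<longrightarrow> y \<bullet> (S *v y) > 0))"

text \<open>Gaussian sensor model psi(s | x) = exp(-1/2 |s - xbar|^2_{Sig^-1}) / eta,
  where xbar = proj x is the component of the state in the search domain.\<close>
definition psi :: "real \<Rightarrow> real^'v^'v \<Rightarrow> (real^'n \<Rightarrow> real^'v) \<Rightarrow> real^'v \<Rightarrow> real^'n \<Rightarrow> real" where
  "psi eta Sig proj s x =
     (1 / eta) * exp (-(1/2) * ((s - proj x) \<bullet> (matrix_inv Sig *v (s - proj x))))"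

definition qstat :: "real \<Rightarrow> real \<Rightarrow> (real^'v \<Rightarrow> real^'n \<Rightarrow> real) \<Rightarrow> (real \<Rightarrow> real^'n) \<Rightarrow> real^'v \<Rightarrow> real" where
  "qstat t0 tf ps traj s = (1 / (tf - t0)) * integral {t0..tf} (\<lambda>t. ps s (traj t))"

definition DKL :: "nat \<Rightarrow> (nat \<Rightarrow> real^'v) \<Rightarrow> (real^'v \<Rightarrow> real) \<Rightarrow> (real^'v \<Rightarrow> real) \<Rightarrow> real" where
  "DKL N smp p q = - (\<Sum>i\<in>{1..N}. p (smp i) * ln (q (smp i)))"

end

theory Submission
  imports Defs
begin

text \<open>
  Write \<open>e l t = xl l t - x t\<close> for the deviation caused by a needle of width \<open>l\<close> at \<open>\<tau>\<close>.
  The closed-loop field is \<open>C\<^sup>1\<close>, so Gronwall's inequality gives \<open>sup\<^sub>t |e l t| = O(l)\<close>, and every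
  \<open>C\<^sup>1\<close> functional of the trajectory changes by its linearisation along \<open>e l\<close> up to \<open>o(l)\<close>.
  For \<open>D\<^sub>K\<^sub>L\<close> this gives \<open>D\<^sub>K\<^sub>L(l) - D\<^sub>K\<^sub>L(0) = - \<integral> b \<bullet> e l + o(l)\<close>, where
  \<open>b = \<Sum>\<^sub>i p(s\<^sub>i) / J\<^sub>i \<nabla>\<psi>(s\<^sub>i | x)\<close>, \<open>J\<^sub>i = \<integral> \<psi>(s\<^sub>i | x)\<close>, is exactly the forcing term of the
  adjoint equation. Differentiating \<open>\<rho> \<bullet> e l\<close> along the adjoint equation and using
  \<open>\<rho>(t\<^sub>f) = 0 = e l t\<^sub>0\<close> turns \<open>\<integral> b \<bullet> e l\<close> into minus the integral of
  \<open>\<rho> \<bullet> (f(x\<^sub>l, \<mu>\<^sub>\<star>) - f(x\<^sub>l, \<mu>(x\<^sub>l)))\<close> over the needle \<open>[\<tau>, \<tau> + l)\<close>, up to \<open>o(l)\<close>; by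
  continuity this is \<open>l \<rho>(\<tau>) \<bullet> (f(x(\<tau>), \<mu>\<^sub>\<star>(\<tau>)) - f(x(\<tau>), \<mu>(x(\<tau>)))) + o(l)\<close>.
\<close>

section \<open>Continuously differentiable fields and their Jacobians\<close>

definition C1 :: "(real^'n \<Rightarrow> real) \<Rightarrow> (real^'n \<Rightarrow> real^'n) \<Rightarrow> bool" where
  "C1 \<phi> D \<longleftrightarrow> (\<forall>y. (\<phi> has_derivative (\<lambda>v. D y \<bullet> v)) (at y)) \<and> continuous_on UNIV D"

lemma C1_has_derivative: "C1 \<phi> D \<Longrightarrow> (\<phi> has_derivative (\<lambda>v. D y \<bullet> v)) (at y)"
  by (simp add: C1_def)

lemma C1_continuous_gradient: "C1 \<phi> D \<Longrightarrow> continuous_on UNIV D"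
  by (simp add: C1_def)

lemma C1_imp_continuous: "C1 \<phi> D \<Longrightarrow> continuous_on UNIV \<phi>"
  by (meson C1_has_derivative continuous_at_imp_continuous_on has_derivative_continuous)

lemma linear_eq_inner_axis:
  fixes L :: "real^'n \<Rightarrow> real"
  assumes "linear L"
  shows "L v = (\<chi> i. L (axis i 1)) \<bullet> v"
proof -
  have "L v = L (\<Sum>i\<in>UNIV. v $ i *\<^sub>R axis i 1)"
    using basis_expansion[of v] by (simp add: scalar_mult_eq_scaleR)
  also have "\<dots> = (\<Sum>i\<in>UNIV. v $ i * L (axis i 1))"
    using assms by (simp add: linear_sum linear_scale)
  also have "\<dots> = (\<chi> i. L (axis i 1)) \<bullet> v"
    by (simp add: inner_vec_def mult.commute)
  finally show ?thesis .
qed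

lemma C1I:
  fixes \<phi> :: "real^'n \<Rightarrow> real"
  assumes "\<And>y. (\<phi> has_derivative L y) (at y)"
    and "\<And>i. continuous_on UNIV (\<lambda>y. L y (axis i 1))"
  shows "C1 \<phi> (\<lambda>y. \<chi> i. L y (axis i 1))"
  unfolding C1_def
proof (intro conjI allI)
  fix y
  have "L y = (\<lambda>v. (\<chi> i. L y (axis i 1)) \<bullet> v)"
    by (rule ext) (rule linear_eq_inner_axis[OF has_derivative_linear[OF assms(1)]])
  then show "(\<phi> has_derivative (\<lambda>v. (\<chi> i. L y (axis i 1)) \<bullet> v)) (at y)"
    using assms(1)[of y] by simp
qed (intro continuous_on_vec_lambda assms(2))

lemma grad_eq_if_C1: "C1 \<phi> D \<Longrightarrow> grad \<phi> = D"
  unfolding grad_def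
  by (auto simp: fun_eq_iff vec_eq_iff inner_axis frechet_derivative_at[OF C1_has_derivative, symmetric])

lemma smooth_scalar_imp_C1:
  assumes "smooth_scalar \<phi>"
  shows "C1 \<phi> (grad \<phi>)"
proof -
  have "Ck (Suc 0) \<phi>"
    using assms unfolding smooth_scalar_def by blast
  then have "C1 \<phi> (\<lambda>y. \<chi> i. frechet_derivative \<phi> (at y) (axis i 1))"
    by (intro C1I) (auto simp: frechet_derivative_works[symmetric])
  then show ?thesis
    by (simp add: grad_def[abs_def])
qed

lemma smooth_vec_imp_C1: "smooth_vec F \<Longrightarrow> C1 (\<lambda>y. F y $ j) (grad (\<lambda>y. F y $ j))"
  by (simp add: smooth_vec_def smooth_scalar_imp_C1)

lemma smooth_mat_imp_C1: "smooth_mat H \<Longrightarrow> C1 (\<lambda>y. H y $ j $ k) (grad (\<lambda>y. H y $ j $ k))"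
  by (simp add: smooth_mat_def smooth_scalar_imp_C1)

lemma C1_const: "C1 (\<lambda>y. c) (\<lambda>y. 0)"
  by (simp add: C1_def)

lemma C1_add:
  assumes "C1 a Da" "C1 b Db"
  shows "C1 (\<lambda>y. a y + b y) (\<lambda>y. Da y + Db y)"
  using assms unfolding C1_def
  by (auto intro!: continuous_intros has_derivative_eq_rhs[OF has_derivative_add] simp: inner_add_left)

lemma C1_mult:
  assumes "C1 a Da" "C1 b Db"
  shows "C1 (\<lambda>y. a y * b y) (\<lambda>y. a y *\<^sub>R Db y + b y *\<^sub>R Da y)"
  using assms C1_imp_continuous[OF assms(1)] C1_imp_continuous[OF assms(2)] unfolding C1_def
  by (auto intro!: continuous_intros has_derivative_eq_rhs[OF has_derivative_mult]
      simp: inner_add_left algebra_simps)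

lemma C1_sum:
  assumes "\<And>k. k \<in> S \<Longrightarrow> C1 (a k) (Da k)"
  shows "C1 (\<lambda>y. \<Sum>k\<in>S. a k y) (\<lambda>y. \<Sum>k\<in>S. Da k y)"
  using assms
proof (induction S rule: infinite_finite_induct)
  case (insert k S)
  then show ?case
    using C1_add[of "a k" "Da k"] by simp
qed (simp_all add: C1_const)

lemma C1_psi:
  fixes proj :: "real^'n \<Rightarrow> real^'v"
  assumes "linear proj"
  shows "C1 (psi eta Sig proj s) (grad (psi eta Sig proj s))"
proof -
  have bl: "bounded_linear proj"
    using assms by (simp add: linear_conv_bounded_linear)
  define M where "M = matrix_inv Sig"
  define Q where "Q y = -(1/2) * ((s - proj y) \<bullet> (M *v (s - proj y)))" for y
  define L where "L y v = (1/eta) * exp (Q y) *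
    (-(1/2) * ((- proj v) \<bullet> (M *v (s - proj y)) + (s - proj y) \<bullet> (M *v (- proj v))))" for y v
  have psi_eq: "psi eta Sig proj s = (\<lambda>y. (1/eta) * exp (Q y))"
    by (simp add: psi_def[abs_def] Q_def M_def)
  have d_res: "((\<lambda>y. s - proj y) has_derivative (\<lambda>v. - proj v)) (at y)" for y
    by (rule has_derivative_eq_rhs[OF has_derivative_diff[OF has_derivative_const
          bounded_linear.has_derivative[OF bl has_derivative_ident]]]) simp
  have d_Mres: "((\<lambda>y. M *v (s - proj y)) has_derivative (\<lambda>v. M *v (- proj v))) (at y)" for y
    by (rule bounded_linear.has_derivative[OF matrix_vector_mul_bounded_linear d_res])
  have d_Q: "(Q has_derivative (\<lambda>v. -(1/2) *
      ((- proj v) \<bullet> (M *v (s - proj y)) + (s - proj y) \<bullet> (M *v (- proj v))))) (at y)" for y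
    unfolding Q_def[abs_def]
    by (rule has_derivative_eq_rhs[OF has_derivative_mult[OF has_derivative_const
          has_derivative_inner[OF d_res d_Mres]]]) (simp add: fun_eq_iff algebra_simps)
  have d_psi: "(psi eta Sig proj s has_derivative L y) (at y)" for y
    unfolding psi_eq L_def[abs_def]
    by (rule has_derivative_eq_rhs, (rule derivative_intros d_Q)+) (simp add: fun_eq_iff algebra_simps)
  have c_proj: "continuous_on UNIV proj"
    by (rule linear_continuous_on[OF bl])
  have c_Q: "continuous_on UNIV Q"
    unfolding Q_def[abs_def]
    by (intro continuous_intros c_proj bounded_linear.continuous_on[OF matrix_vector_mul_bounded_linear])
  have "continuous_on UNIV (\<lambda>y. L y (axis i 1))" for i
    unfolding L_def
    by (intro continuous_intros c_proj c_Q bounded_linear.continuous_on[OF matrix_vector_mul_bounded_linear])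
  then have "C1 (psi eta Sig proj s) (\<lambda>y. \<chi> i. L y (axis i 1))"
    by (rule C1I[OF d_psi])
  then show ?thesis
    using grad_eq_if_C1 by metis
qed

lemma has_derivative_vec_lambdaI:
  fixes F :: "'a::real_normed_vector \<Rightarrow> real^'n"
  assumes "\<And>j. ((\<lambda>x. F x $ j) has_derivative (\<lambda>v. F' v $ j)) (at a)"
  shows "(F has_derivative F') (at a)"
  using assms
  by (subst has_derivative_componentwise_within) (auto simp: Basis_vec_def cart_eq_inner_axis)

lemma C1_vec_has_derivative:
  fixes F :: "real^'n \<Rightarrow> real^'m"
  assumes "\<And>j. C1 (\<lambda>y. F y $ j) (D j)"
  shows "(F has_derivative (\<lambda>v. \<chi> j. D j y \<bullet> v)) (at y)"
  using assms by (intro has_derivative_vec_lambdaI) (simp add: C1_has_derivative)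

lemma jacobian_apply:
  fixes F :: "real^'n \<Rightarrow> real^'m"
  assumes "(F has_derivative F') (at y)"
  shows "jacobian F (at y) *v w = F' w"
proof -
  have "F' = frechet_derivative F (at y)"
    using assms by (rule frechet_derivative_at)
  moreover have "linear F'"
    using assms by (rule has_derivative_linear)
  ultimately show ?thesis
    by (simp add: jacobian_def matrix_works)
qed

lemma jacobian_C1_vec:
  fixes F :: "real^'n \<Rightarrow> real^'m"
  assumes "\<And>j. C1 (\<lambda>y. F y $ j) (D j)"
  shows "jacobian F (at y) *v w = (\<chi> j. D j y \<bullet> w)"
  by (rule jacobian_apply[OF C1_vec_has_derivative[OF assms]])

context
  fixes g :: "real^'n \<Rightarrow> real^'n" and h :: "real^'n \<Rightarrow> real^'m^'n"
    and f :: "real^'n \<Rightarrow> real^'m \<Rightarrow> real^'n" and mu :: "real^'n \<Rightarrow> real^'m"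
    and Dg :: "'n \<Rightarrow> real^'n \<Rightarrow> real^'n" and Dh :: "'n \<Rightarrow> 'm \<Rightarrow> real^'n \<Rightarrow> real^'n"
    and Dmu :: "'m \<Rightarrow> real^'n \<Rightarrow> real^'n"
  assumes f_eq: "\<And>y u. f y u = g y + h y *v u"
    and C1_g: "\<And>j. C1 (\<lambda>y. g y $ j) (Dg j)"
    and C1_h: "\<And>j k. C1 (\<lambda>y. h y $ j $ k) (Dh j k)"
    and C1_mu: "\<And>k. C1 (\<lambda>y. mu y $ k) (Dmu k)"
begin

lemma control_affine_component: "f y u $ j = g y $ j + (\<Sum>k\<in>UNIV. h y $ j $ k * u $ k)"
  by (simp add: f_eq matrix_vector_mult_def)

lemma C1_closed_loop:
  "C1 (\<lambda>y. f y (mu y) $ j)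
      (\<lambda>y. Dg j y + (\<Sum>k\<in>UNIV. h y $ j $ k *\<^sub>R Dmu k y + mu y $ k *\<^sub>R Dh j k y))"
  unfolding control_affine_component by (intro C1_add C1_g C1_sum C1_mult C1_h C1_mu)

lemma closed_loop_jacobian:
  "jacobian (\<lambda>y. f y (mu y0)) (at y0) + jacobian (f y0) (at (mu y0)) ** jacobian mu (at y0)
    = jacobian (\<lambda>y. f y (mu y)) (at y0)"
proof (subst matrix_eq, intro allI)
  fix w
  let ?c = "mu y0"
  have d_state: "((\<lambda>y. f y ?c) has_derivative
      (\<lambda>v. \<chi> j. Dg j y0 \<bullet> v + (\<Sum>k\<in>UNIV. (Dh j k y0 \<bullet> v) * ?c $ k))) (at y0)"
    using C1_has_derivative[OF C1_g] C1_has_derivative[OF C1_h]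
    by (intro has_derivative_vec_lambdaI, unfold control_affine_component vec_lambda_beta)
      (auto intro!: derivative_intros)
  have d_control: "(f y0 has_derivative (\<lambda>u. h y0 *v u)) (at ?c)"
    unfolding f_eq[abs_def]
    by (rule has_derivative_eq_rhs, (rule derivative_intros
          bounded_linear.has_derivative[OF matrix_vector_mul_bounded_linear])+) simp
  have "(jacobian (\<lambda>y. f y ?c) (at y0) + jacobian (f y0) (at ?c) ** jacobian mu (at y0)) *v w
      = jacobian (\<lambda>y. f y ?c) (at y0) *v w + jacobian (f y0) (at ?c) *v (jacobian mu (at y0) *v w)"
    by (simp add: matrix_vector_mult_add_rdistrib matrix_vector_mul_assoc)
  also have "\<dots> = (\<chi> j. Dg j y0 \<bullet> w + (\<Sum>k\<in>UNIV. (Dh j k y0 \<bullet> w) * ?c $ k))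
      + h y0 *v (\<chi> k. Dmu k y0 \<bullet> w)"
    using jacobian_apply[OF d_state] jacobian_apply[OF d_control] jacobian_C1_vec[OF C1_mu] by simp
  also have "\<dots> = jacobian (\<lambda>y. f y (mu y)) (at y0) *v w"
    unfolding jacobian_C1_vec[OF C1_closed_loop]
    by (simp add: vec_eq_iff matrix_vector_mult_def
        inner_add_left inner_sum_left sum.distrib algebra_simps)
  finally show "(jacobian (\<lambda>y. f y ?c) (at y0) + jacobian (f y0) (at ?c) ** jacobian mu (at y0)) *v w
      = jacobian (\<lambda>y. f y (mu y)) (at y0) *v w" .
qed

end

lemma continuous_on_control_affine:
  fixes g :: "real^'n \<Rightarrow> real^'n" and h :: "real^'n \<Rightarrow> real^'m^'n"
    and f :: "real^'n \<Rightarrow> real^'m \<Rightarrow> real^'n" and u :: "real \<Rightarrow> real^'m"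
  assumes f_eq: "\<And>y u. f y u = g y + h y *v u"
    and g: "\<And>j. continuous_on UNIV (\<lambda>y. g y $ j)"
    and h: "\<And>j k. continuous_on UNIV (\<lambda>y. h y $ j $ k)"
    and u: "continuous_on S u"
  shows "continuous_on (S \<times> UNIV) (\<lambda>z. f (snd z) (u (fst z)))"
proof -
  have cg: "continuous_on (S \<times> UNIV) (\<lambda>z. g (snd z) $ j)" for j
    by (rule continuous_on_compose2[OF g continuous_on_snd]) auto
  have ch: "continuous_on (S \<times> UNIV) (\<lambda>z. h (snd z) $ j $ k)" for j k
    by (rule continuous_on_compose2[OF h continuous_on_snd]) auto
  have cu: "continuous_on (S \<times> UNIV) (\<lambda>z. u (fst z) $ k)" for k
    by (intro continuous_on_compose2[OF u continuous_on_fst] continuous_intros) auto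
  have "continuous_on (S \<times> UNIV)
      (\<lambda>z. \<chi> j. g (snd z) $ j + (\<Sum>k\<in>UNIV. h (snd z) $ j $ k * u (fst z) $ k))"
    by (intro continuous_on_vec_lambda continuous_intros cg ch cu)
  moreover have "(\<lambda>z. \<chi> j. g (snd z) $ j + (\<Sum>k\<in>UNIV. h (snd z) $ j $ k * u (fst z) $ k))
      = (\<lambda>z. f (snd z) (u (fst z)))"
    by (simp add: fun_eq_iff vec_eq_iff f_eq matrix_vector_mult_def)
  ultimately show ?thesis
    by metis
qed

section \<open>Uniform estimates near a compact set\<close>

definition unit_nbhd :: "'a::euclidean_space set \<Rightarrow> 'a set" where
  "unit_nbhd K = {y + z |y z. y \<in> K \<and> z \<in> cball 0 1}"

lemma compact_unit_nbhd: "compact K \<Longrightarrow> compact (unit_nbhd K)"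
  unfolding unit_nbhd_def by (intro compact_sums compact_cball)

lemma unit_nbhdI:
  assumes "y \<in> K" "norm (z - y) \<le> 1"
  shows "z \<in> unit_nbhd K"
proof -
  have "z = y + (z - y)" "z - y \<in> cball 0 1"
    using assms(2) by simp_all
  then show ?thesis
    unfolding unit_nbhd_def using assms(1) by blast
qed

lemma onorm_inner_le: "onorm (\<lambda>v. a \<bullet> v) \<le> norm a"
  for a :: "'a::euclidean_space"
  by (rule onorm_le) (simp add: Cauchy_Schwarz_ineq2 real_norm_def)

lemma C1_lipschitz_near_compact:
  fixes \<phi> :: "real^'n \<Rightarrow> real"
  assumes "C1 \<phi> D" "compact K"
  obtains L where "L \<ge> 0"
    "\<And>y z. y \<in> K \<Longrightarrow> norm (z - y) \<le> 1 \<Longrightarrow> \<bar>\<phi> z - \<phi> y\<bar> \<le> L * norm (z - y)"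
proof -
  have "continuous_on (unit_nbhd K) D"
    using C1_continuous_gradient[OF assms(1)] by (rule continuous_on_subset) simp
  from compact_continuous_image[OF this compact_unit_nbhd[OF assms(2)]]
  obtain B where B: "\<forall>w\<in>unit_nbhd K. norm (D w) \<le> B"
    by (auto dest!: compact_imp_bounded simp: bounded_iff)
  show thesis
  proof (rule that[of "max B 0"])
    fix y z assume y: "y \<in> K" and z: "norm (z - y) \<le> 1"
    have "norm (\<phi> z - \<phi> y) \<le> max B 0 * norm (z - y)"
    proof (rule differentiable_bound[of "cball y 1"])
      show "(\<phi> has_derivative (\<lambda>v. D w \<bullet> v)) (at w within cball y 1)" for w
        using C1_has_derivative[OF assms(1)] by (rule has_derivative_at_withinI)
      show "onorm (\<lambda>v. D w \<bullet> v) \<le> max B 0" if "w \<in> cball y 1" for w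
      proof -
        have "w \<in> unit_nbhd K"
          using that unit_nbhdI[OF y, of w] by (simp add: dist_norm norm_minus_commute)
        then show ?thesis
          using B onorm_inner_le[of "D w"] by force
      qed
    qed (use z in \<open>auto simp: dist_norm norm_minus_commute\<close>)
    then show "\<bar>\<phi> z - \<phi> y\<bar> \<le> max B 0 * norm (z - y)"
      by simp
  qed simp
qed

lemma C1_uniform_linearization:
  fixes \<phi> :: "real^'n \<Rightarrow> real"
  assumes "C1 \<phi> D" "compact K" "\<epsilon> > 0"
  obtains \<delta> where "\<delta> > 0" "\<And>y z. y \<in> K \<Longrightarrow> norm (z - y) < \<delta> \<Longrightarrow>
    \<bar>\<phi> z - \<phi> y - D y \<bullet> (z - y)\<bar> \<le> \<epsilon> * norm (z - y)"
proof -
  have "continuous_on (unit_nbhd K) D"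
    using C1_continuous_gradient[OF assms(1)] by (rule continuous_on_subset) simp
  then obtain d where d: "d > 0"
    and uc: "\<And>w w'. w \<in> unit_nbhd K \<Longrightarrow> w' \<in> unit_nbhd K \<Longrightarrow> dist w' w < d \<Longrightarrow> dist (D w') (D w) < \<epsilon>"
    using compact_uniformly_continuous[OF _ compact_unit_nbhd[OF assms(2)]] assms(3)
    unfolding uniformly_continuous_on_def by metis
  show thesis
  proof (rule that[of "min d 1"])
    fix y z assume y: "y \<in> K" and z: "norm (z - y) < min d 1"
    have near: "w \<in> unit_nbhd K \<and> dist w y < d" if "w \<in> ball y (min d 1)" for w
      using that unit_nbhdI[OF y, of w] by (auto simp: dist_norm norm_minus_commute)
    have "norm (\<phi> z - \<phi> y - D y \<bullet> (z - y)) \<le> norm (z - y) * \<epsilon>"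
    proof (rule differentiable_bound_linearization[of y z "ball y (min d 1)" \<phi> "\<lambda>w v. D w \<bullet> v" y])
      show "y + t *\<^sub>R (z - y) \<in> ball y (min d 1)" if "t \<in> {0..1}" for t
      proof -
        have "norm (t *\<^sub>R (z - y)) \<le> norm (z - y)"
          using that by (auto intro: mult_left_le_one_le)
        then show ?thesis
          using z by (simp add: dist_norm)
      qed
      show "(\<phi> has_derivative (\<lambda>v. D w \<bullet> v)) (at w within ball y (min d 1))" for w
        using C1_has_derivative[OF assms(1)] by (rule has_derivative_at_withinI)
      show "onorm ((\<lambda>v. D w \<bullet> v) - (\<lambda>v. D y \<bullet> v)) \<le> \<epsilon>" if "w \<in> ball y (min d 1)" for w
      proof -
        have "(\<lambda>v. D w \<bullet> v) - (\<lambda>v. D y \<bullet> v) = (\<lambda>v. (D w - D y) \<bullet> v)"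
          by (simp add: fun_eq_iff inner_diff_left)
        moreover have "norm (D w - D y) \<le> \<epsilon>"
          using uc[of y w] near[OF that] unit_nbhdI[OF y, of y] by (simp add: dist_norm)
        ultimately show ?thesis
          using onorm_inner_le[of "D w - D y"] by simp
      qed
    qed (use d in simp)
    then show "\<bar>\<phi> z - \<phi> y - D y \<bullet> (z - y)\<bar> \<le> \<epsilon> * norm (z - y)"
      by (simp add: mult.commute)
  qed (use d in simp)
qed

lemma C1_vec_lipschitz_near_compact:
  fixes F :: "real^'n \<Rightarrow> real^'k"
  assumes "\<And>j. C1 (\<lambda>y. F y $ j) (D j)" "compact K"
  obtains L where "L \<ge> 0"
    "\<And>y z. y \<in> K \<Longrightarrow> norm (z - y) \<le> 1 \<Longrightarrow> norm (F z - F y) \<le> L * norm (z - y)"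
proof -
  have "\<forall>j. \<exists>L\<ge>0. \<forall>y\<in>K. \<forall>z. norm (z - y) \<le> 1 \<longrightarrow> \<bar>F z $ j - F y $ j\<bar> \<le> L * norm (z - y)"
    by (metis C1_lipschitz_near_compact[OF assms(1) assms(2)])
  then obtain L where L: "\<And>j. L j \<ge> 0"
    "\<And>j y z. y \<in> K \<Longrightarrow> norm (z - y) \<le> 1 \<Longrightarrow> \<bar>F z $ j - F y $ j\<bar> \<le> L j * norm (z - y)"
    by metis
  show thesis
  proof (rule that[of "\<Sum>j\<in>UNIV. L j"])
    fix y z assume "y \<in> K" "norm (z - y) \<le> 1"
    then have "norm (F z - F y) \<le> (\<Sum>j\<in>UNIV. L j * norm (z - y))"
      using L(2) by (intro order.trans[OF norm_le_l1_cart] sum_mono) simp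
    then show "norm (F z - F y) \<le> (\<Sum>j\<in>UNIV. L j) * norm (z - y)"
      by (simp add: sum_distrib_right)
  qed (simp add: L(1) sum_nonneg)
qed

section \<open>Gronwall's inequality and switched integrands\<close>

lemma gronwall:
  fixes u :: "real \<Rightarrow> real"
  assumes "continuous_on {a..t} u" "L \<ge> 0"
    and bound: "\<And>s. s \<in> {a..t} \<Longrightarrow> u s \<le> K + L * integral {a..s} u"
    and "a \<le> t"
  shows "u t \<le> K * exp (L * (t - a))"
proof -
  define I where "I s = integral {a..s} u" for s
  define w where "w s = exp (- L * (s - a)) * (K + L * I s)" for s
  have dI: "(I has_real_derivative u s) (at s within {a..t})" if "s \<in> {a..t}" for s
    unfolding I_def by (rule integral_has_real_derivative[OF assms(1) that])
  have "continuous_on {a..t} I"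
    using dI by (meson DERIV_continuous continuous_on_eq_continuous_within)
  then have cw: "continuous_on {a..t} w"
    unfolding w_def by (intro continuous_intros)
  have "w t \<le> w a"
  proof (rule DERIV_nonpos_imp_decreasing_open[OF \<open>a \<le> t\<close> _ cw])
    fix s assume s: "a < s" "s < t"
    then have dIs: "(I has_real_derivative u s) (at s)"
      using dI[of s] at_within_interior[of s "{a..t}"] by simp
    have "(w has_real_derivative exp (- L * (s - a)) * (L * (u s - (K + L * I s)))) (at s)"
      unfolding w_def by (rule derivative_eq_intros dIs refl | simp)+ (simp add: algebra_simps)
    moreover have "exp (- L * (s - a)) * (L * (u s - (K + L * I s))) \<le> 0"
      using bound[of s] s \<open>L \<ge> 0\<close> unfolding I_def
      by (intro mult_nonneg_nonpos) (auto intro: mult_nonneg_nonpos)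
    ultimately show "\<exists>y. (w has_real_derivative y) (at s) \<and> y \<le> 0"
      by blast
  qed
  then have "exp (- L * (t - a)) * (K + L * I t) \<le> K"
    by (simp add: w_def I_def)
  moreover have "exp (L * (t - a)) * exp (- L * (t - a)) = 1"
    by (simp add: exp_add[symmetric])
  ultimately have "K + L * I t \<le> exp (L * (t - a)) * K"
    by (metis mult.assoc mult_1 mult_left_mono exp_ge_zero)
  then have "K + L * I t \<le> K * exp (L * (t - a))"
    by (simp only: mult.commute[of "exp (L * (t - a))" K])
  then show ?thesis
    using bound[of t] \<open>a \<le> t\<close> unfolding I_def by simp
qed

lemma continuous_bootstrap:
  fixes u :: "real \<Rightarrow> real"
  assumes cont: "continuous_on {a..b} u" and start: "u a < c" and "c' < c"
    and step: "\<And>s. s \<in> {a..b} \<Longrightarrow> \<forall>r\<in>{a..s}. u r < c \<Longrightarrow> u s \<le> c'"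
  shows "\<forall>t\<in>{a..b}. u t < c"
proof (rule ccontr)
  assume "\<not> (\<forall>t\<in>{a..b}. u t < c)"
  define Z where "Z = {r \<in> {a..b}. (\<lambda>_. c) r \<le> u r}"
  have "Z \<noteq> {}" "bdd_below Z"
    using \<open>\<not> _\<close> by (auto simp: Z_def not_less intro: bdd_belowI[of _ a])
  moreover have "closed Z"
    unfolding Z_def by (rule continuous_on_closed_Collect_le[OF continuous_on_const cont closed_atLeastAtMost])
  ultimately have "Inf Z \<in> Z"
    by (rule closed_contains_Inf)
  define t1 where "t1 = Inf Z"
  have t1: "t1 \<in> {a..b}" "c \<le> u t1"
    using \<open>Inf Z \<in> Z\<close> by (auto simp: Z_def t1_def)
  have "a < t1"
    using t1 start by (cases "a = t1") auto
  have below: "u r < c" if "r \<in> {a..<t1}" for r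
  proof (rule ccontr)
    assume "\<not> u r < c"
    then have "r \<in> Z"
      using that t1(1) by (auto simp: Z_def)
    then show False
      using that cInf_lower[OF _ \<open>bdd_below Z\<close>, of r] by (simp add: t1_def)
  qed
  have "{a..<t1} \<subseteq> {r \<in> {a..t1}. u r \<le> (\<lambda>_. c') r}"
    using step below t1(1) by auto
  moreover have "closed {r \<in> {a..t1}. u r \<le> (\<lambda>_. c') r}"
    using t1(1)
    by (intro continuous_on_closed_Collect_le continuous_on_subset[OF cont] continuous_on_const) auto
  ultimately have "closure {a..<t1} \<subseteq> {r \<in> {a..t1}. u r \<le> c'}"
    by (rule closure_minimal)
  moreover have "t1 \<in> closure {a..<t1}"
    using \<open>a < t1\<close> by simp
  ultimately have "u t1 \<le> c'"
    by blast
  then show False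
    using t1(2) \<open>c' < c\<close> by simp
qed

lemma integrable_switch:
  fixes P Q :: "real \<Rightarrow> 'a::banach"
  assumes P: "continuous_on {a..b} P" and Q: "continuous_on {a..b} Q"
  shows "(\<lambda>r. if c \<le> r \<and> r < d then P r else Q r) integrable_on {a..b}"
proof -
  have "{c..d} \<inter> {a..b} = {max c a..min d b}"
    by auto
  moreover have "(\<lambda>r. P r - Q r) integrable_on {max c a..min d b}"
    by (intro integrable_continuous_interval continuous_on_subset[OF continuous_on_diff[OF P Q]]) auto
  ultimately have "(\<lambda>r. if r \<in> {c..d} then P r - Q r else 0) integrable_on {a..b}"
    using integrable_restrict_Int[of "{c..d}" "\<lambda>r. P r - Q r" "{a..b}"] by simp
  then have "(\<lambda>r. Q r + (if r \<in> {c..d} then P r - Q r else 0)) integrable_on {a..b}"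
    by (rule integrable_add[OF integrable_continuous_interval[OF Q]])
  then show ?thesis
    by (rule integrable_spike_finite[where S="{d}", rotated 2]) auto
qed

lemma integrable_indicator_interval:
  fixes a b c d :: real
  shows "(\<lambda>r. if c \<le> r \<and> r < d then 1::real else 0) integrable_on {a..b}"
  using integrable_switch[of a b "\<lambda>_. 1::real" "\<lambda>_. 0"] by simp

lemma integral_indicator_interval:
  "integral {a..b} (\<lambda>r. if c \<le> r \<and> r < d then 1::real else 0) = max 0 (min d b - max c a)"
proof -
  have "integral {a..b} (\<lambda>r. if c \<le> r \<and> r < d then 1::real else 0)
      = integral {a..b} (\<lambda>r. if r \<in> {c..d} then 1 else 0)"
    by (rule integral_spike[where S="{d}"]) (auto simp: less_le)
  also have "\<dots> = integral ({c..d} \<inter> {a..b}) (\<lambda>r. 1)"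
    by (rule integral_restrict_Int)
  also have "{c..d} \<inter> {a..b} = {max c a..min d b}"
    by auto
  finally show ?thesis
    by (cases "max c a \<le> min d b") (auto simp: max_def min_def)
qed

lemma integral_pos_continuous:
  fixes f :: "real \<Rightarrow> real"
  assumes "a < b" "continuous_on {a..b} f" "\<And>t. t \<in> {a..b} \<Longrightarrow> f t > 0"
  shows "integral {a..b} f > 0"
proof -
  obtain s where s: "s \<in> {a..b}" "\<And>t. t \<in> {a..b} \<Longrightarrow> f s \<le> f t"
    using continuous_attains_inf[OF compact_Icc _ assms(2)] assms(1) by auto
  have "0 < (b - a) * f s"
    using assms(1) assms(3)[OF s(1)] by simp
  also have "\<dots> = integral {a..b} (\<lambda>t. f s)"
    using assms(1) by simp
  also have "\<dots> \<le> integral {a..b} f"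
    using s assms(2) by (intro integral_le integrable_continuous_interval) auto
  finally show ?thesis .
qed

section \<open>First-order expansions in little-o form\<close>

lemma DERIV_compose_smallo:
  fixes J L g :: "'a \<Rightarrow> real"
  assumes "(\<phi> has_real_derivative \<phi>') (at J0)" "(g \<longlongrightarrow> 0) F"
    and lin: "(\<lambda>l. J l - J0 - L l) \<in> o[F](g)" and lip: "(\<lambda>l. J l - J0) \<in> O[F](g)"
  shows "(\<lambda>l. \<phi> (J l) - \<phi> J0 - \<phi>' * L l) \<in> o[F](g)"
proof -
  obtain c where c: "\<And>z. \<phi> z - \<phi> J0 = c z * (z - J0)" "isCont c J0" "c J0 = \<phi>'"
    using assms(1) CARAT_DERIV by metis
  obtain B where "\<forall>\<^sub>F l in F. norm (J l - J0) \<le> B * norm (g l)"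
    using lip by (auto elim: landau_o.bigE)
  then have "((\<lambda>l. J l - J0) \<longlongrightarrow> 0) F"
    by (intro tendsto_0_le[OF tendsto_norm_zero[OF assms(2)], of _ B])
       (auto elim!: eventually_mono simp: mult.commute)
  then have "((\<lambda>l. c (J l)) \<longlongrightarrow> \<phi>') F"
    using isCont_tendsto_compose[OF c(2), of J] c(3) by (simp add: LIM_zero_iff)
  then have "(\<lambda>l. c (J l) - \<phi>') \<in> o[F](\<lambda>_. 1)"
    by (intro smalloI_tendsto) (auto simp: LIM_zero_iff)
  then have "(\<lambda>l. (J l - J0) * (c (J l) - \<phi>')) \<in> o[F](\<lambda>l. g l * 1)"
    by (rule landau_o.big_small_mult[OF lip])
  moreover have "(\<lambda>l. \<phi>' * (J l - J0 - L l)) \<in> o[F](g)"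
    using lin by simp
  ultimately have "(\<lambda>l. (J l - J0) * (c (J l) - \<phi>') + \<phi>' * (J l - J0 - L l)) \<in> o[F](g)"
    by (intro sum_in_smallo) simp_all
  moreover have "(\<lambda>l. (J l - J0) * (c (J l) - \<phi>') + \<phi>' * (J l - J0 - L l))
      = (\<lambda>l. \<phi> (J l) - \<phi> J0 - \<phi>' * L l)"
  proof (rule ext)
    fix l
    have "\<phi> (J l) = \<phi> J0 + c (J l) * (J l - J0)"
      using c(1)[of "J l"] by simp
    then show "(J l - J0) * (c (J l) - \<phi>') + \<phi>' * (J l - J0 - L l) = \<phi> (J l) - \<phi> J0 - \<phi>' * L l"
      by (simp add: algebra_simps)
  qed
  ultimately show ?thesis
    by (simp only:)
qed

lemma has_real_derivative_at_right_smalloI: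
  assumes "(\<lambda>l. f l - f 0 - l * D) \<in> o[at_right 0](\<lambda>l. l)"
  shows "(f has_real_derivative D) (at_right 0)"
proof -
  have "((\<lambda>l. (f l - f 0 - l * D) / l + D) \<longlongrightarrow> D) (at_right 0)"
    using tendsto_add[OF smalloD_tendsto[OF assms] tendsto_const[of D]] by simp
  then have "((\<lambda>l. (f l - f 0) / (l - 0)) \<longlongrightarrow> D) (at_right 0)"
    by (rule Lim_transform_eventually)
      (use eventually_at_right_less[of 0] in \<open>eventually_elim, simp add: field_simps\<close>)
  then show ?thesis
    unfolding has_field_derivative_iff .
qed

section \<open>Needle variations\<close>

lemma at_within_Icc_minus_finite:
  fixes a b t :: real
  assumes "finite S" "t \<in> {a<..<b} - S"
  shows "at t within ({a..b} - S) = at t"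
proof (rule at_within_interior)
  have "open ({a<..<b} - S)"
    using assms(1) by (intro open_Diff finite_imp_closed) auto
  then have "{a<..<b} - S \<subseteq> interior ({a..b} - S)"
    by (intro interior_maximal) auto
  then show "t \<in> interior ({a..b} - S)"
    using assms(2) by blast
qed

text \<open>
  In the application \<open>F y = f y (\<mu> y)\<close> is the closed-loop field and \<open>P r y = f y (\<mu>\<^sub>\<star> r)\<close> the
  field applied on the needle; \<open>xl l\<close> is the trajectory \<open>x\<^sub>\<lambda>\<close> of the paper with \<open>\<lambda> = l\<close>.
\<close>

locale needle_variation =
  fixes F :: "real^'n \<Rightarrow> real^'n" and DF :: "'n \<Rightarrow> real^'n \<Rightarrow> real^'n"
    and P :: "real \<Rightarrow> real^'n \<Rightarrow> real^'n"
    and x :: "real \<Rightarrow> real^'n" and xl :: "real \<Rightarrow> real \<Rightarrow> real^'n"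
    and x0 :: "real^'n" and t0 tf tau d0 :: real
  assumes C1_F: "\<And>j. C1 (\<lambda>y. F y $ j) (DF j)"
    and continuous_P: "continuous_on ({t0..tf} \<times> UNIV) (\<lambda>z. P (fst z) (snd z))"
    and t0_tau: "t0 < tau" and tau_tf: "tau < tf"
    and x_init: "x t0 = x0"
    and x_ode: "\<And>t. t \<in> {t0..tf} \<Longrightarrow> (x has_vector_derivative F (x t)) (at t within {t0..tf})"
    and d0_pos: "d0 > 0"
    and xl_continuous: "\<And>l. 0 \<le> l \<Longrightarrow> l < d0 \<Longrightarrow> continuous_on {t0..tf} (xl l)"
    and xl_integral: "\<And>l t. 0 \<le> l \<Longrightarrow> l < d0 \<Longrightarrow> t \<in> {t0..tf} \<Longrightarrow>
      xl l t = x0 + integral {t0..t}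
        (\<lambda>r. if tau \<le> r \<and> r < tau + l then P r (xl l r) else F (xl l r))"
begin

definition needle_field :: "real \<Rightarrow> real \<Rightarrow> real^'n" where
  "needle_field l r = (if tau \<le> r \<and> r < tau + l then P r (xl l r) else F (xl l r))"

definition dF :: "real^'n \<Rightarrow> real^'n \<Rightarrow> real^'n" where
  "dF y w = (\<chi> j. DF j y \<bullet> w)"

definition orbit :: "(real^'n) set" where
  "orbit = x ` {t0..tf}"

lemma continuous_F: "continuous_on UNIV F"
proof -
  have "continuous_on UNIV (\<lambda>y. \<chi> j. F y $ j)"
    by (intro continuous_on_vec_lambda C1_imp_continuous[OF C1_F])
  then show ?thesis
    by simp
qed

lemma continuous_x: "continuous_on {t0..tf} x"
  using x_ode by (meson continuous_on_eq_continuous_within has_vector_derivative_continuous)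

lemma continuous_F_x: "continuous_on {t0..tf} (\<lambda>r. F (x r))"
  by (rule continuous_on_compose2[OF continuous_F continuous_x]) auto

lemma continuous_F_xl: "0 \<le> l \<Longrightarrow> l < d0 \<Longrightarrow> continuous_on {t0..tf} (\<lambda>r. F (xl l r))"
  by (rule continuous_on_compose2[OF continuous_F xl_continuous]) auto

lemma continuous_P_comp:
  assumes "continuous_on {t0..tf} y"
  shows "continuous_on {t0..tf} (\<lambda>r. P r (y r))"
proof -
  have "continuous_on {t0..tf} (\<lambda>r. (\<lambda>z. P (fst z) (snd z)) (r, y r))"
    by (rule continuous_on_compose2[OF continuous_P]) (auto intro!: continuous_intros assms)
  then show ?thesis
    by simp
qed

lemma compact_orbit: "compact orbit"
  unfolding orbit_def by (intro compact_continuous_image continuous_x compact_Icc)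

lemma x_in_orbit: "t \<in> {t0..tf} \<Longrightarrow> x t \<in> orbit"
  unfolding orbit_def by auto

lemma x_integral:
  assumes "t \<in> {t0..tf}"
  shows "x t = x0 + integral {t0..t} (\<lambda>r. F (x r))"
proof -
  have "((\<lambda>r. F (x r)) has_integral (x t - x t0)) {t0..t}"
    using assms by (intro fundamental_theorem_of_calculus has_vector_derivative_within_subset[OF x_ode]) auto
  then show ?thesis
    using x_init by (simp add: integral_unique)
qed

lemma xl_init: "0 \<le> l \<Longrightarrow> l < d0 \<Longrightarrow> xl l t0 = x0"
  using xl_integral[of l t0] t0_tau tau_tf by simp

lemma integrable_needle_field:
  assumes "0 \<le> l" "l < d0" "t \<le> tf"
  shows "needle_field l integrable_on {t0..t}"
proof -
  have "needle_field l integrable_on {t0..tf}"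
    unfolding needle_field_def[abs_def]
    by (rule integrable_switch[OF continuous_P_comp[OF xl_continuous[OF assms(1,2)]]
          continuous_F_xl[OF assms(1,2)]])
  then show ?thesis
    by (rule integrable_on_subinterval) (use assms(3) in auto)
qed

lemma deviation_integral:
  assumes "0 \<le> l" "l < d0" "t \<in> {t0..tf}"
  shows "xl l t - x t = integral {t0..t} (\<lambda>r. needle_field l r - F (x r))"
proof -
  have "(\<lambda>r. F (x r)) integrable_on {t0..t}"
    using assms(3) by (intro integrable_continuous_interval continuous_on_subset[OF continuous_F_x]) auto
  moreover have "xl l t = x0 + integral {t0..t} (needle_field l)"
    using xl_integral[OF assms] by (simp add: needle_field_def[abs_def])
  ultimately show ?thesis
    using x_integral[OF assms(3)] integrable_needle_field[OF assms(1,2)] assms(3)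
    by (simp add: integral_diff)
qed

lemma F_lipschitz_near_x:
  obtains L where "L \<ge> 0"
    "\<And>t z. t \<in> {t0..tf} \<Longrightarrow> norm (z - x t) \<le> 1 \<Longrightarrow> norm (F z - F (x t)) \<le> L * norm (z - x t)"
  using C1_vec_lipschitz_near_compact[OF C1_F compact_orbit] x_in_orbit by metis

lemma P_jump_bounded:
  obtains M where "M \<ge> 0"
    "\<And>r z. r \<in> {t0..tf} \<Longrightarrow> norm (z - x r) \<le> 1 \<Longrightarrow> norm (P r z - F (x r)) \<le> M"
proof -
  let ?S = "{t0..tf} \<times> unit_nbhd orbit" and ?jump = "\<lambda>z. P (fst z) (snd z) - F (x (fst z))"
  have "continuous_on ?S ?jump"
    by (intro continuous_intros continuous_on_subset[OF continuous_P]
        continuous_on_compose2[OF continuous_F_x continuous_on_fst]) auto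
  then have "compact (?jump ` ?S)"
    by (intro compact_continuous_image compact_Times compact_Icc compact_unit_nbhd compact_orbit)
  then obtain B where B: "\<forall>v\<in>?jump ` ?S. norm v \<le> B"
    by (auto dest!: compact_imp_bounded simp: bounded_iff)
  show thesis
  proof (rule that[of "max B 0"])
    fix r z assume "r \<in> {t0..tf}" "norm (z - x r) \<le> 1"
    then have "(r, z) \<in> ?S"
      using unit_nbhdI[OF x_in_orbit] by auto
    then show "norm (P r z - F (x r)) \<le> max B 0"
      using B by force
  qed simp
qed

context
  fixes L M :: real
  assumes L_nonneg: "L \<ge> 0"
    and F_lipschitz: "\<And>t z. t \<in> {t0..tf} \<Longrightarrow> norm (z - x t) \<le> 1 \<Longrightarrow>
      norm (F z - F (x t)) \<le> L * norm (z - x t)"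
    and M_nonneg: "M \<ge> 0"
    and P_jump: "\<And>r z. r \<in> {t0..tf} \<Longrightarrow> norm (z - x r) \<le> 1 \<Longrightarrow> norm (P r z - F (x r)) \<le> M"
begin

lemma deviation_integral_inequality:
  assumes l: "0 \<le> l" "l < d0" and s: "s \<in> {t0..tf}"
    and near: "\<forall>r\<in>{t0..s}. norm (xl l r - x r) < 1"
  shows "norm (xl l s - x s) \<le> M * l + L * integral {t0..s} (\<lambda>r. norm (xl l r - x r))"
proof -
  let ?u = "\<lambda>r. norm (xl l r - x r)" and ?ind = "\<lambda>r. if tau \<le> r \<and> r < tau + l then 1::real else 0"
  have sub: "{t0..s} \<subseteq> {t0..tf}"
    using s by auto
  have int_u: "?u integrable_on {t0..s}"
    by (intro integrable_continuous_interval continuous_intros continuous_on_subset[OF _ sub]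
        xl_continuous[OF l] continuous_x)
  have int_dev: "(\<lambda>r. needle_field l r - F (x r)) integrable_on {t0..s}"
    using s by (intro integrable_diff integrable_needle_field[OF l] integrable_continuous_interval
        continuous_on_subset[OF continuous_F_x sub]) auto
  have "?u s = norm (integral {t0..s} (\<lambda>r. needle_field l r - F (x r)))"
    using deviation_integral[OF l s] by simp
  also have "\<dots> \<le> integral {t0..s} (\<lambda>r. L * ?u r + M * ?ind r)"
  proof (rule integral_norm_bound_integral[OF int_dev])
    show "(\<lambda>r. L * ?u r + M * ?ind r) integrable_on {t0..s}"
      by (intro integrable_add integrable_on_mult_right int_u integrable_indicator_interval)
    fix r assume "r \<in> {t0..s}"
    then have "norm (xl l r - x r) \<le> 1" "r \<in> {t0..tf}"
      using near sub by (auto intro: less_imp_le)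
    then have "norm (F (xl l r) - F (x r)) \<le> L * ?u r" "norm (P r (xl l r) - F (x r)) \<le> M"
      using F_lipschitz P_jump by auto
    moreover have "0 \<le> L * ?u r"
      using L_nonneg by simp
    ultimately show "norm (needle_field l r - F (x r)) \<le> L * ?u r + M * ?ind r"
      by (auto simp: needle_field_def)
  qed
  also have "\<dots> = L * integral {t0..s} ?u + M * integral {t0..s} ?ind"
    using int_u integrable_indicator_interval[of tau "tau + l" t0 s]
    by (simp add: integral_add integrable_on_mult_right)
  also have "\<dots> \<le> L * integral {t0..s} ?u + M * l"
    using l(1) M_nonneg by (intro add_left_mono mult_left_mono)
      (auto simp: integral_indicator_interval max_def min_def)
  finally show ?thesis
    by simp
qed

lemma deviation_gronwall:
  assumes l: "0 \<le> l" "l < d0" and s: "s \<in> {t0..tf}"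
    and near: "\<forall>r\<in>{t0..s}. norm (xl l r - x r) < 1"
  shows "norm (xl l s - x s) \<le> M * exp (L * (tf - t0)) * l"
proof -
  let ?u = "\<lambda>r. norm (xl l r - x r)"
  have "?u s \<le> (M * l) * exp (L * (s - t0))"
  proof (rule gronwall[OF _ L_nonneg])
    show "continuous_on {t0..s} ?u"
      using s by (intro continuous_intros continuous_on_subset[OF xl_continuous[OF l]]
          continuous_on_subset[OF continuous_x]) auto
    fix r assume "r \<in> {t0..s}"
    then show "?u r \<le> M * l + L * integral {t0..r} ?u"
      using near s by (intro deviation_integral_inequality[OF l]) auto
  qed (use s in auto)
  also have "\<dots> \<le> (M * l) * exp (L * (tf - t0))"
    using s L_nonneg M_nonneg l(1) by (intro mult_left_mono) (auto intro: mult_left_mono)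
  finally show ?thesis
    by (simp add: algebra_simps)
qed

end

text \<open>
  F is only Lipschitz near the nominal trajectory, so the Gronwall bound is available only while
  the deviation stays below 1; the bootstrap shows that for small needles it always does.
\<close>

lemma deviation_bound:
  obtains C d where "C \<ge> 0" "0 < d" "d \<le> d0"
    "\<And>l t. 0 \<le> l \<Longrightarrow> l < d \<Longrightarrow> t \<in> {t0..tf} \<Longrightarrow>
      norm (xl l t - x t) \<le> C * l \<and> norm (xl l t - x t) < 1"
proof -
  obtain L where L: "L \<ge> 0"
      "\<And>t z. t \<in> {t0..tf} \<Longrightarrow> norm (z - x t) \<le> 1 \<Longrightarrow> norm (F z - F (x t)) \<le> L * norm (z - x t)"
    using F_lipschitz_near_x by blast
  obtain M where M: "M \<ge> 0" "\<And>r z. r \<in> {t0..tf} \<Longrightarrow> norm (z - x r) \<le> 1 \<Longrightarrow> norm (P r z - F (x r)) \<le> M"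
    using P_jump_bounded by blast
  define C where "C = M * exp (L * (tf - t0))"
  define d where "d = min d0 (1 / (C + 1))"
  have "C \<ge> 0"
    using M(1) by (simp add: C_def)
  have "norm (xl l t - x t) \<le> C * l \<and> norm (xl l t - x t) < 1"
    if l: "0 \<le> l" "l < d" and t: "t \<in> {t0..tf}" for l t
  proof -
    have l0: "l < d0"
      using l by (simp add: d_def)
    have "(C + 1) * l < 1"
      using l \<open>C \<ge> 0\<close> by (simp add: d_def field_simps)
    then have "C * l < 1"
      using l(1) by (simp add: algebra_simps)
    have "\<forall>r\<in>{t0..tf}. norm (xl l r - x r) < 1"
    proof (rule continuous_bootstrap[OF _ _ \<open>C * l < 1\<close>])
      show "continuous_on {t0..tf} (\<lambda>r. norm (xl l r - x r))"
        by (intro continuous_intros xl_continuous[OF l(1) l0] continuous_x)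
      show "norm (xl l t0 - x t0) < 1"
        by (simp add: x_init xl_init[OF l(1) l0])
    qed (use deviation_gronwall[OF L M l(1) l0] in \<open>simp add: C_def\<close>)
    then show ?thesis
      using deviation_gronwall[OF L M l(1) l0 t] t by (simp add: C_def)
  qed
  moreover have "0 < d" "d \<le> d0"
    using d0_pos \<open>C \<ge> 0\<close> by (simp_all add: d_def)
  ultimately show thesis
    using that[OF \<open>C \<ge> 0\<close>] by blast
qed

lemma xl_zero: "t \<in> {t0..tf} \<Longrightarrow> xl 0 t = x t"
  by (rule deviation_bound) force

lemma eventually_admissible: "\<forall>\<^sub>F l in at_right 0. 0 < l \<and> l < d0"
  unfolding eventually_at_right_field using d0_pos by (intro exI[of _ d0]) auto

lemma eventually_deviation_bound:
  obtains C where "C \<ge> 0" "\<forall>\<^sub>F l in at_right 0.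
    \<forall>t\<in>{t0..tf}. norm (xl l t - x t) \<le> C * l \<and> norm (xl l t - x t) < 1"
proof -
  obtain C d where "C \<ge> 0" "0 < d" "d \<le> d0"
    and bound: "\<And>l t. 0 \<le> l \<Longrightarrow> l < d \<Longrightarrow> t \<in> {t0..tf} \<Longrightarrow>
      norm (xl l t - x t) \<le> C * l \<and> norm (xl l t - x t) < 1"
    by (rule deviation_bound) blast
  have "\<forall>\<^sub>F l in at_right 0. \<forall>t\<in>{t0..tf}. norm (xl l t - x t) \<le> C * l \<and> norm (xl l t - x t) < 1"
    unfolding eventually_at_right_field
  proof (intro exI[of _ d] conjI allI impI \<open>0 < d\<close>)
    fix l :: real assume "0 < l" "l < d"
    then show "\<forall>t\<in>{t0..tf}. norm (xl l t - x t) \<le> C * l \<and> norm (xl l t - x t) < 1"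
      using bound[of l] by simp
  qed
  with \<open>C \<ge> 0\<close> show thesis
    by (rule that)
qed

lemma C1_deviation_remainder:
  assumes "C1 \<phi> D" "\<epsilon> > 0"
  shows "\<forall>\<^sub>F l in at_right 0. \<forall>t\<in>{t0..tf}.
    \<bar>\<phi> (xl l t) - \<phi> (x t) - D (x t) \<bullet> (xl l t - x t)\<bar> \<le> \<epsilon> * l"
proof -
  obtain C where "C \<ge> 0" and dev: "\<forall>\<^sub>F l in at_right 0.
      \<forall>t\<in>{t0..tf}. norm (xl l t - x t) \<le> C * l \<and> norm (xl l t - x t) < 1"
    by (rule eventually_deviation_bound)
  obtain \<delta> where "\<delta> > 0" and lin: "\<And>y z. y \<in> orbit \<Longrightarrow> norm (z - y) < \<delta> \<Longrightarrow>
      \<bar>\<phi> z - \<phi> y - D y \<bullet> (z - y)\<bar> \<le> \<epsilon> / (C + 1) * norm (z - y)"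
    using C1_uniform_linearization[OF assms(1) compact_orbit, of "\<epsilon> / (C + 1)"] \<open>C \<ge> 0\<close> assms(2)
    by auto
  have "\<forall>\<^sub>F l in at_right 0. C * l < \<delta>"
    by (rule order_tendstoD(2)[OF tendsto_mult_right_zero[OF tendsto_ident_at] \<open>\<delta> > 0\<close>])
  with dev eventually_at_right_less[of 0] show ?thesis
  proof eventually_elim
    case (elim l)
    show ?case
    proof
      fix t assume t: "t \<in> {t0..tf}"
      have e: "norm (xl l t - x t) \<le> C * l"
        using elim t by blast
      then have "\<bar>\<phi> (xl l t) - \<phi> (x t) - D (x t) \<bullet> (xl l t - x t)\<bar>
          \<le> \<epsilon> / (C + 1) * norm (xl l t - x t)"
        using lin[OF x_in_orbit[OF t]] elim by simp
      also have "\<dots> \<le> \<epsilon> / (C + 1) * (C * l)"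
        using e assms(2) \<open>C \<ge> 0\<close> by (intro mult_left_mono) auto
      also have "\<dots> \<le> \<epsilon> * l"
        using assms(2) \<open>C \<ge> 0\<close> elim by (simp add: field_simps)
      finally show "\<bar>\<phi> (xl l t) - \<phi> (x t) - D (x t) \<bullet> (xl l t - x t)\<bar> \<le> \<epsilon> * l" .
    qed
  qed
qed

lemma F_deviation_remainder:
  assumes "\<epsilon> > 0"
  shows "\<forall>\<^sub>F l in at_right 0. \<forall>t\<in>{t0..tf}.
    norm (F (xl l t) - F (x t) - dF (x t) (xl l t - x t)) \<le> \<epsilon> * l"
proof -
  have "\<epsilon> / CARD('n) > 0"
    using assms by simp
  then have "\<forall>j. \<forall>\<^sub>F l in at_right 0. \<forall>t\<in>{t0..tf}.
      \<bar>F (xl l t) $ j - F (x t) $ j - DF j (x t) \<bullet> (xl l t - x t)\<bar> \<le> \<epsilon> / CARD('n) * l"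
    by (intro allI C1_deviation_remainder[OF C1_F])
  then have "\<forall>\<^sub>F l in at_right 0. \<forall>j. \<forall>t\<in>{t0..tf}.
      \<bar>F (xl l t) $ j - F (x t) $ j - DF j (x t) \<bullet> (xl l t - x t)\<bar> \<le> \<epsilon> / CARD('n) * l"
    by (intro eventually_all_finite) blast
  then show ?thesis
  proof eventually_elim
    case (elim l)
    show ?case
    proof
      fix t assume t: "t \<in> {t0..tf}"
      have "norm (F (xl l t) - F (x t) - dF (x t) (xl l t - x t))
          \<le> (\<Sum>j\<in>UNIV. \<bar>(F (xl l t) - F (x t) - dF (x t) (xl l t - x t)) $ j\<bar>)"
        by (rule norm_le_l1_cart)
      also have "\<dots> \<le> (\<Sum>j\<in>(UNIV::'n set). \<epsilon> / CARD('n) * l)"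
        using elim t by (intro sum_mono) (simp add: dF_def)
      also have "\<dots> = \<epsilon> * l"
        by simp
      finally show "norm (F (xl l t) - F (x t) - dF (x t) (xl l t - x t)) \<le> \<epsilon> * l" .
    qed
  qed
qed

lemma integral_C1_expansion:
  assumes "C1 \<phi> D"
  shows "(\<lambda>l. integral {t0..tf} (\<lambda>t. \<phi> (xl l t)) - integral {t0..tf} (\<lambda>t. \<phi> (x t))
      - integral {t0..tf} (\<lambda>t. D (x t) \<bullet> (xl l t - x t))) \<in> o[at_right 0](\<lambda>l. l)"
proof (rule landau_o.smallI)
  fix \<epsilon> :: real assume "\<epsilon> > 0"
  then have "\<epsilon> / (tf - t0) > 0"
    using t0_tau tau_tf by simp
  from C1_deviation_remainder[OF assms this] eventually_admissible
  show "\<forall>\<^sub>F l in at_right 0. norm (integral {t0..tf} (\<lambda>t. \<phi> (xl l t)) - integral {t0..tf} (\<lambda>t. \<phi> (x t))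
      - integral {t0..tf} (\<lambda>t. D (x t) \<bullet> (xl l t - x t))) \<le> \<epsilon> * norm l"
  proof eventually_elim
    case (elim l)
    have cont: "continuous_on {t0..tf} (\<lambda>t. \<phi> (xl l t))" "continuous_on {t0..tf} (\<lambda>t. \<phi> (x t))"
        "continuous_on {t0..tf} (\<lambda>t. D (x t) \<bullet> (xl l t - x t))"
      using elim by (intro continuous_intros continuous_on_compose2[OF C1_imp_continuous[OF assms]]
          continuous_on_compose2[OF C1_continuous_gradient[OF assms]] xl_continuous continuous_x; simp)+
    have "norm (integral {t0..tf} (\<lambda>t. \<phi> (xl l t) - \<phi> (x t) - D (x t) \<bullet> (xl l t - x t)))
        \<le> \<epsilon> / (tf - t0) * l * (tf - t0)"
      using elim t0_tau tau_tf by (intro integral_bound continuous_intros cont) auto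
    then show ?case
      using cont elim t0_tau tau_tf
      by (simp add: integral_diff integrable_continuous_interval integrable_diff)
  qed
qed

lemma integral_C1_bigo:
  assumes "C1 \<phi> D"
  shows "(\<lambda>l. integral {t0..tf} (\<lambda>t. \<phi> (xl l t)) - integral {t0..tf} (\<lambda>t. \<phi> (x t)))
    \<in> O[at_right 0](\<lambda>l. l)"
proof -
  obtain L where L: "L \<ge> 0" "\<And>y z. y \<in> orbit \<Longrightarrow> norm (z - y) \<le> 1 \<Longrightarrow> \<bar>\<phi> z - \<phi> y\<bar> \<le> L * norm (z - y)"
    using C1_lipschitz_near_compact[OF assms compact_orbit] by blast
  obtain C where "C \<ge> 0" and dev: "\<forall>\<^sub>F l in at_right 0.
      \<forall>t\<in>{t0..tf}. norm (xl l t - x t) \<le> C * l \<and> norm (xl l t - x t) < 1"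
    by (rule eventually_deviation_bound)
  from dev eventually_admissible
  have "\<forall>\<^sub>F l in at_right 0. norm (integral {t0..tf} (\<lambda>t. \<phi> (xl l t)) - integral {t0..tf} (\<lambda>t. \<phi> (x t)))
      \<le> (L * C * (tf - t0)) * norm l"
  proof eventually_elim
    case (elim l)
    have cont: "continuous_on {t0..tf} (\<lambda>t. \<phi> (xl l t))" "continuous_on {t0..tf} (\<lambda>t. \<phi> (x t))"
      using elim by (intro continuous_on_compose2[OF C1_imp_continuous[OF assms]] xl_continuous continuous_x; simp)+
    have "\<bar>\<phi> (xl l t) - \<phi> (x t)\<bar> \<le> L * (C * l)" if "t \<in> {t0..tf}" for t
    proof -
      have "\<bar>\<phi> (xl l t) - \<phi> (x t)\<bar> \<le> L * norm (xl l t - x t)"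
        using L(2)[OF x_in_orbit[OF that], of "xl l t"] elim that by (simp add: less_imp_le)
      also have "\<dots> \<le> L * (C * l)"
        using elim that L(1) by (intro mult_left_mono) auto
      finally show ?thesis .
    qed
    then have "norm (integral {t0..tf} (\<lambda>t. \<phi> (xl l t) - \<phi> (x t))) \<le> L * (C * l) * (tf - t0)"
      using t0_tau tau_tf by (intro integral_bound continuous_intros cont) auto
    then show ?case
      using cont elim by (simp add: integral_diff integrable_continuous_interval algebra_simps)
  qed
  then show ?thesis
    by (rule bigoI)
qed

lemma ln_integral_expansion:
  assumes "C1 \<phi> D" "\<And>y. \<phi> y > 0"
  shows "(\<lambda>l. ln (integral {t0..tf} (\<lambda>t. \<phi> (xl l t))) - ln (integral {t0..tf} (\<lambda>t. \<phi> (x t)))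
      - inverse (integral {t0..tf} (\<lambda>t. \<phi> (x t))) * integral {t0..tf} (\<lambda>t. D (x t) \<bullet> (xl l t - x t)))
    \<in> o[at_right 0](\<lambda>l. l)"
proof -
  have "integral {t0..tf} (\<lambda>t. \<phi> (x t)) > 0"
    using t0_tau tau_tf assms(2)
    by (intro integral_pos_continuous continuous_on_compose2[OF C1_imp_continuous[OF assms(1)] continuous_x]) auto
  then show ?thesis
    by (rule DERIV_compose_smallo[OF DERIV_ln tendsto_ident_at integral_C1_expansion[OF assms(1)]
          integral_C1_bigo[OF assms(1)]])
qed

lemma needle_points_converge:
  assumes "\<eta> > 0"
  shows "\<forall>\<^sub>F l in at_right 0. \<forall>t. tau \<le> t \<and> t < tau + l \<longrightarrow>
    t \<in> {t0..tf} \<and> dist (t, xl l t) (tau, x tau) < \<eta>"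
proof -
  have "tau \<in> {t0..tf}"
    using t0_tau tau_tf by simp
  then obtain \<eta>' where "\<eta>' > 0" and near_x: "\<And>t. t \<in> {t0..tf} \<Longrightarrow> dist t tau < \<eta>' \<Longrightarrow>
      dist (x t) (x tau) < \<eta> / 2"
    using continuous_x assms unfolding continuous_on_iff by (metis half_gt_zero)
  obtain C where "C \<ge> 0" and dev: "\<forall>\<^sub>F l in at_right 0.
      \<forall>t\<in>{t0..tf}. norm (xl l t - x t) \<le> C * l \<and> norm (xl l t - x t) < 1"
    by (rule eventually_deviation_bound)
  have "\<forall>\<^sub>F l in at_right 0. (C + 1) * l < \<eta> / 2"
    using assms by (intro order_tendstoD(2)[OF tendsto_mult_right_zero[OF tendsto_ident_at]]) simp
  moreover have "\<forall>\<^sub>F l in at_right 0. l < min \<eta>' (tf - tau)"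
    using \<open>\<eta>' > 0\<close> tau_tf by (intro order_tendstoD(2)[OF tendsto_ident_at]) simp
  ultimately show ?thesis
    using dev eventually_at_right_less[of 0]
  proof eventually_elim
    case (elim l)
    show ?case
    proof (intro allI impI conjI)
      fix t assume t: "tau \<le> t \<and> t < tau + l"
      show tI: "t \<in> {t0..tf}"
        using elim t t0_tau by auto
      have "dist t tau \<le> l"
        using t by (simp add: dist_real_def)
      then have "dist (x t) (x tau) < \<eta> / 2"
        using near_x tI elim by simp
      moreover have "dist (xl l t) (x t) \<le> C * l"
        using elim tI by (simp add: dist_norm)
      ultimately have "dist (t, xl l t) (tau, x tau) \<le> l + (C * l + \<eta> / 2)"
        using \<open>dist t tau \<le> l\<close> dist_triangle[of "xl l t" "x tau" "x t"]
        unfolding dist_Pair_Pair by (intro order.trans[OF sqrt_sum_squares_le_sum]) auto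
      also have "\<dots> < \<eta>"
        using elim by (simp add: algebra_simps)
      finally show "dist (t, xl l t) (tau, x tau) < \<eta>" .
    qed
  qed
qed

lemma needle_field_continuous:
  assumes l: "0 \<le> l" "l < d0" and t: "t \<in> {t0..tf}" "t \<noteq> tau" "t \<noteq> tau + l"
  shows "continuous (at t within {t0..tf}) (needle_field l)"
proof -
  have cF: "continuous (at t within {t0..tf}) (\<lambda>r. F (xl l r))"
    using continuous_F_xl[OF l] t(1) by (simp add: continuous_on_eq_continuous_within)
  have cP: "continuous (at t within {t0..tf}) (\<lambda>r. P r (xl l r))"
    using continuous_P_comp[OF xl_continuous[OF l]] t(1) by (simp add: continuous_on_eq_continuous_within)
  consider "t < tau" | "tau < t \<and> t < tau + l" | "tau + l < t"
    using t(2,3) by (meson linorder_neqE)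
  then show ?thesis
  proof cases
    case 1
    show ?thesis
      by (rule continuous_transform_within[OF cF, of "tau - t"])
        (use 1 t in \<open>auto simp: needle_field_def dist_real_def\<close>)
  next
    case 2
    show ?thesis
      by (rule continuous_transform_within[OF cP, of "min (t - tau) (tau + l - t)"])
        (use 2 t in \<open>auto simp: needle_field_def dist_real_def\<close>)
  next
    case 3
    show ?thesis
      by (rule continuous_transform_within[OF cF, of "t - (tau + l)"])
        (use 3 t in \<open>auto simp: needle_field_def dist_real_def\<close>)
  qed
qed

lemma xl_has_vector_derivative:
  assumes l: "0 \<le> l" "l < d0" and t: "t \<in> {t0<..<tf} - {tau, tau + l}"
  shows "(xl l has_vector_derivative needle_field l t) (at t)"
proof -
  have "((\<lambda>u. integral {t0..u} (needle_field l)) has_vector_derivative needle_field l t)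
      (at t within ({t0..tf} - {tau, tau + l}))"
    using t by (intro integral_has_vector_derivative_continuous_at integrable_needle_field[OF l]
        continuous_within_subset[OF needle_field_continuous[OF l]]) auto
  then have "((\<lambda>u. x0 + integral {t0..u} (needle_field l)) has_vector_derivative needle_field l t) (at t)"
    using at_within_Icc_minus_finite[of "{tau, tau + l}" t t0 tf] t
    by (auto intro: has_vector_derivative_add[OF has_vector_derivative_const, simplified])
  then show ?thesis
  proof (rule has_vector_derivative_transform_within_open[OF _ open_greaterThanLessThan])
    show "x0 + integral {t0..u} (needle_field l) = xl l u" if "u \<in> {t0<..<tf}" for u
      using xl_integral[OF l, of u] that by (simp add: needle_field_def[abs_def])
  qed (use t in auto)
qed

lemma x_has_vector_derivative: "t \<in> {t0<..<tf} \<Longrightarrow> (x has_vector_derivative F (x t)) (at t)"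
  using x_ode[of t] at_within_Icc_at[of t0 t tf] by auto

end

section \<open>The adjoint equation\<close>

lemma has_vector_derivative_inner:
  fixes f g :: "real \<Rightarrow> 'a::real_inner"
  assumes "(f has_vector_derivative f') (at t)" "(g has_vector_derivative g') (at t)"
  shows "((\<lambda>s. f s \<bullet> g s) has_vector_derivative f t \<bullet> g' + f' \<bullet> g t) (at t)"
  using assms unfolding has_vector_derivative_def
  by (rule has_derivative_eq_rhs[OF has_derivative_inner]) (simp add: fun_eq_iff algebra_simps)

lemma DKL_qstat_diff:
  assumes "t0 < tf"
    and pos1: "\<And>i. i \<in> {1..N} \<Longrightarrow> integral {t0..tf} (\<lambda>t. ps (smp i) (y1 t)) > 0"
    and pos2: "\<And>i. i \<in> {1..N} \<Longrightarrow> integral {t0..tf} (\<lambda>t. ps (smp i) (y2 t)) > 0"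
  shows "DKL N smp p (qstat t0 tf ps y1) - DKL N smp p (qstat t0 tf ps y2)
    = - (\<Sum>i\<in>{1..N}. p (smp i) * (ln (integral {t0..tf} (\<lambda>t. ps (smp i) (y1 t)))
          - ln (integral {t0..tf} (\<lambda>t. ps (smp i) (y2 t)))))"
proof -
  have ln_q: "ln (qstat t0 tf ps y (smp i)) = ln (integral {t0..tf} (\<lambda>t. ps (smp i) (y t))) - ln (tf - t0)"
    if "integral {t0..tf} (\<lambda>t. ps (smp i) (y t)) > 0" for y i
    using that assms(1) by (simp add: qstat_def ln_div)
  show ?thesis
    unfolding DKL_def using pos1 pos2
    by (simp add: ln_q sum_subtractf right_diff_distrib)
qed

locale needle_adjoint = needle_variation F DF P x xl x0 t0 tf tau d0
  for F :: "real^'n \<Rightarrow> real^'n" and DF P x xl x0 t0 tf tau d0 +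
  fixes rho b rd :: "real \<Rightarrow> real^'n"
  assumes rho_deriv: "\<And>t. t \<in> {t0..tf} \<Longrightarrow> (rho has_vector_derivative rd t) (at t within {t0..tf})"
    and adjoint_eq: "\<And>t w. t \<in> {t0..tf} \<Longrightarrow> rd t \<bullet> w = b t \<bullet> w - rho t \<bullet> (\<chi> j. DF j (x t) \<bullet> w)"
    and rho_final: "rho tf = 0"
    and continuous_b: "continuous_on {t0..tf} b"
begin

definition needle_term :: "real \<Rightarrow> real \<Rightarrow> real" where
  "needle_term l t = (if tau \<le> t \<and> t < tau + l then rho t \<bullet> (P t (xl l t) - F (xl l t)) else 0)"

lemma continuous_rho: "continuous_on {t0..tf} rho"
  using rho_deriv by (meson continuous_on_eq_continuous_within has_vector_derivative_continuous)

lemma continuous_dF_deviation: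
  "0 \<le> l \<Longrightarrow> l < d0 \<Longrightarrow> continuous_on {t0..tf} (\<lambda>t. dF (x t) (xl l t - x t))"
  unfolding dF_def
  by (intro continuous_on_vec_lambda continuous_intros xl_continuous continuous_x
      continuous_on_compose2[OF C1_continuous_gradient[OF C1_F] continuous_x]) auto

lemma integrable_needle_term: "0 \<le> l \<Longrightarrow> l < d0 \<Longrightarrow> needle_term l integrable_on {t0..tf}"
  unfolding needle_term_def[abs_def]
  by (intro integrable_switch continuous_intros continuous_rho continuous_P_comp xl_continuous
      continuous_F_xl continuous_on_const)

lemma adjoint_identity:
  assumes l: "0 \<le> l" "l < d0"
  shows "((\<lambda>t. b t \<bullet> (xl l t - x t) + rho t \<bullet> (F (xl l t) - F (x t) - dF (x t) (xl l t - x t))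
      + needle_term l t) has_integral 0) {t0..tf}"
proof -
  let ?e = "\<lambda>t. xl l t - x t"
  have ftc: "((\<lambda>t. rho t \<bullet> (needle_field l t - F (x t)) + rd t \<bullet> ?e t) has_integral
      rho tf \<bullet> ?e tf - rho t0 \<bullet> ?e t0) {t0..tf}"
  proof (rule fundamental_theorem_of_calculus_interior_strong[where S="{tau, tau + l}"])
    show "continuous_on {t0..tf} (\<lambda>t. rho t \<bullet> ?e t)"
      by (intro continuous_intros continuous_rho xl_continuous[OF l] continuous_x)
    fix t assume t: "t \<in> {t0<..<tf} - {tau, tau + l}"
    have "(rho has_vector_derivative rd t) (at t)"
      using rho_deriv[of t] at_within_Icc_at[of t0 t tf] t by auto
    moreover have "(?e has_vector_derivative needle_field l t - F (x t)) (at t)"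
      using t by (intro has_vector_derivative_diff xl_has_vector_derivative[OF l] x_has_vector_derivative) auto
    ultimately show "((\<lambda>t. rho t \<bullet> ?e t) has_vector_derivative
        rho t \<bullet> (needle_field l t - F (x t)) + rd t \<bullet> ?e t) (at t)"
      by (rule has_vector_derivative_inner)
  qed (use t0_tau tau_tf in auto)
  have boundary: "rho tf \<bullet> ?e tf - rho t0 \<bullet> ?e t0 = 0"
    using rho_final xl_init[OF l] x_init by simp
  have integrand: "rho t \<bullet> (needle_field l t - F (x t)) + rd t \<bullet> ?e t
      = b t \<bullet> ?e t + rho t \<bullet> (F (xl l t) - F (x t) - dF (x t) (?e t)) + needle_term l t"
    if "t \<in> {t0..tf}" for t
  proof (cases "tau \<le> t \<and> t < tau + l")
    case True
    then show ?thesis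
      using adjoint_eq[OF that, of "?e t"]
      by (simp add: needle_field_def needle_term_def dF_def inner_diff_right)
  next
    case False
    then have "needle_field l t = F (xl l t)" "needle_term l t = 0"
      unfolding needle_field_def needle_term_def if_not_P[OF False] by simp_all
    then show ?thesis
      using adjoint_eq[OF that, of "?e t"] by (simp add: dF_def inner_diff_right)
  qed
  have "((\<lambda>t. b t \<bullet> ?e t + rho t \<bullet> (F (xl l t) - F (x t) - dF (x t) (?e t)) + needle_term l t)
      has_integral 0) {t0..tf}
    \<longleftrightarrow> ((\<lambda>t. rho t \<bullet> (needle_field l t - F (x t)) + rd t \<bullet> ?e t) has_integral 0) {t0..tf}"
    by (rule has_integral_cong) (rule integrand[symmetric])
  then show ?thesis
    using ftc[unfolded boundary] by blast
qed

lemma linearization_term_smallo: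
  "(\<lambda>l. integral {t0..tf} (\<lambda>t. rho t \<bullet> (F (xl l t) - F (x t) - dF (x t) (xl l t - x t))))
    \<in> o[at_right 0](\<lambda>l. l)"
proof (rule landau_o.smallI)
  fix \<epsilon> :: real assume "\<epsilon> > 0"
  obtain R where "R > 0" and R: "\<And>t. t \<in> {t0..tf} \<Longrightarrow> norm (rho t) \<le> R"
    using compact_imp_bounded[OF compact_continuous_image[OF continuous_rho compact_Icc]]
    by (auto simp: bounded_pos)
  have "\<epsilon> / (R * (tf - t0)) > 0"
    using \<open>\<epsilon> > 0\<close> \<open>R > 0\<close> t0_tau tau_tf by simp
  from F_deviation_remainder[OF this] eventually_admissible
  show "\<forall>\<^sub>F l in at_right 0. norm (integral {t0..tf}
      (\<lambda>t. rho t \<bullet> (F (xl l t) - F (x t) - dF (x t) (xl l t - x t)))) \<le> \<epsilon> * norm l"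
  proof eventually_elim
    case (elim l)
    have "norm (integral {t0..tf} (\<lambda>t. rho t \<bullet> (F (xl l t) - F (x t) - dF (x t) (xl l t - x t))))
        \<le> R * (\<epsilon> / (R * (tf - t0)) * l) * (tf - t0)"
    proof (rule integral_bound)
      show "continuous_on {t0..tf} (\<lambda>t. rho t \<bullet> (F (xl l t) - F (x t) - dF (x t) (xl l t - x t)))"
        using elim by (intro continuous_intros continuous_rho continuous_F_xl continuous_F_x
            continuous_dF_deviation) auto
      fix t assume t: "t \<in> {t0..tf}"
      have "\<bar>rho t \<bullet> (F (xl l t) - F (x t) - dF (x t) (xl l t - x t))\<bar>
          \<le> norm (rho t) * norm (F (xl l t) - F (x t) - dF (x t) (xl l t - x t))"
        by (rule Cauchy_Schwarz_ineq2)
      also have "\<dots> \<le> R * (\<epsilon> / (R * (tf - t0)) * l)"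
        using elim R[OF t] t \<open>R > 0\<close> by (intro mult_mono) auto
      finally show "norm (rho t \<bullet> (F (xl l t) - F (x t) - dF (x t) (xl l t - x t)))
          \<le> R * (\<epsilon> / (R * (tf - t0)) * l)"
        by simp
    qed (use t0_tau tau_tf in simp)
    then show ?case
      using \<open>R > 0\<close> t0_tau tau_tf elim by simp
  qed
qed

lemma needle_integrand_near:
  assumes "\<epsilon> > 0"
  shows "\<forall>\<^sub>F l in at_right 0. \<forall>t. tau \<le> t \<and> t < tau + l \<longrightarrow>
    \<bar>rho t \<bullet> (P t (xl l t) - F (xl l t)) - rho tau \<bullet> (P tau (x tau) - F (x tau))\<bar> < \<epsilon>"
proof -
  define g where "g z = rho (fst z) \<bullet> (P (fst z) (snd z) - F (snd z))" for z
  have "continuous_on ({t0..tf} \<times> UNIV) g"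
    unfolding g_def
    by (intro continuous_intros continuous_on_compose2[OF continuous_rho continuous_on_fst]
        continuous_P continuous_on_compose2[OF continuous_F continuous_on_snd]) auto
  moreover have "(tau, x tau) \<in> {t0..tf} \<times> UNIV"
    using t0_tau tau_tf by simp
  ultimately obtain \<eta> where "\<eta> > 0" and near_g: "\<And>z. z \<in> {t0..tf} \<times> UNIV \<Longrightarrow>
      dist z (tau, x tau) < \<eta> \<Longrightarrow> dist (g z) (g (tau, x tau)) < \<epsilon>"
    using assms unfolding continuous_on_iff by metis
  from needle_points_converge[OF this(1)] show ?thesis
  proof eventually_elim
    case (elim l)
    show ?case
    proof (intro allI impI)
      fix t assume "tau \<le> t \<and> t < tau + l"
      then have "dist (g (t, xl l t)) (g (tau, x tau)) < \<epsilon>"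
        using elim near_g by simp
      then show "\<bar>rho t \<bullet> (P t (xl l t) - F (xl l t)) - rho tau \<bullet> (P tau (x tau) - F (x tau))\<bar> < \<epsilon>"
        by (simp add: g_def dist_real_def)
    qed
  qed
qed

lemma needle_term_expansion:
  "(\<lambda>l. integral {t0..tf} (needle_term l) - l * (rho tau \<bullet> (P tau (x tau) - F (x tau))))
    \<in> o[at_right 0](\<lambda>l. l)"
proof (rule landau_o.smallI)
  fix \<epsilon> :: real assume "\<epsilon> > 0"
  let ?w = "rho tau \<bullet> (P tau (x tau) - F (x tau))"
  have "\<forall>\<^sub>F l in at_right 0. l < tf - tau"
    using tau_tf by (intro order_tendstoD(2)[OF tendsto_ident_at]) simp
  with needle_integrand_near[OF \<open>\<epsilon> > 0\<close>] eventually_admissible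
  show "\<forall>\<^sub>F l in at_right 0. norm (integral {t0..tf} (needle_term l) - l * ?w) \<le> \<epsilon> * norm l"
  proof eventually_elim
    case (elim l)
    let ?ind = "\<lambda>t. if tau \<le> t \<and> t < tau + l then 1::real else 0"
    have ind: "integral {t0..tf} ?ind = l"
      using elim t0_tau by (simp add: integral_indicator_interval max_def min_def)
    have "integral {t0..tf} (\<lambda>t. needle_term l t - ?w * ?ind t)
        = integral {t0..tf} (needle_term l) - integral {t0..tf} (\<lambda>t. ?w * ?ind t)"
      using elim by (intro integral_diff integrable_needle_term integrable_on_mult_right integrable_indicator_interval) auto
    then have eq: "integral {t0..tf} (needle_term l) - l * ?w
        = integral {t0..tf} (\<lambda>t. needle_term l t - ?w * ?ind t)"
      by (simp only: integral_mult_right ind mult.commute)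
    have "norm (integral {t0..tf} (\<lambda>t. needle_term l t - ?w * ?ind t))
        \<le> integral {t0..tf} (\<lambda>t. \<epsilon> * ?ind t)"
    proof (rule integral_norm_bound_integral)
      show "(\<lambda>t. needle_term l t - ?w * ?ind t) integrable_on {t0..tf}"
        using elim by (intro integrable_diff integrable_needle_term integrable_on_mult_right integrable_indicator_interval) auto
      show "(\<lambda>t. \<epsilon> * ?ind t) integrable_on {t0..tf}"
        by (intro integrable_on_mult_right integrable_indicator_interval)
      fix t
      show "norm (needle_term l t - ?w * ?ind t) \<le> \<epsilon> * ?ind t"
      proof (cases "tau \<le> t \<and> t < tau + l")
        case True
        then show ?thesis
          using elim by (simp add: needle_term_def less_imp_le)
      next
        case False
        then show ?thesis
          unfolding needle_term_def if_not_P[OF False] by simp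
      qed
    qed
    also have "\<dots> = \<epsilon> * l"
      by (simp only: integral_mult_right ind)
    finally show ?case
      using elim by (simp only: eq real_norm_def abs_of_pos)
  qed
qed

lemma forcing_integral_expansion:
  "(\<lambda>l. integral {t0..tf} (\<lambda>t. b t \<bullet> (xl l t - x t)) + l * (rho tau \<bullet> (P tau (x tau) - F (x tau))))
    \<in> o[at_right 0](\<lambda>l. l)"
proof -
  let ?w = "rho tau \<bullet> (P tau (x tau) - F (x tau))"
    and ?lin = "\<lambda>l t. rho t \<bullet> (F (xl l t) - F (x t) - dF (x t) (xl l t - x t))"
  have "(\<lambda>l. integral {t0..tf} (?lin l) + (integral {t0..tf} (needle_term l) - l * ?w))
      \<in> o[at_right 0](\<lambda>l. l)"
    by (rule sum_in_smallo(1)[OF linearization_term_smallo needle_term_expansion])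
  then have "(\<lambda>l. - (integral {t0..tf} (?lin l) + (integral {t0..tf} (needle_term l) - l * ?w)))
      \<in> o[at_right 0](\<lambda>l. l)"
    by (subst landau_o.small.uminus_in_iff)
  moreover have "\<forall>\<^sub>F l in at_right 0.
      - (integral {t0..tf} (?lin l) + (integral {t0..tf} (needle_term l) - l * ?w))
      = integral {t0..tf} (\<lambda>t. b t \<bullet> (xl l t - x t)) + l * ?w"
    using eventually_admissible
  proof eventually_elim
    case (elim l)
    then have l: "0 \<le> l" "l < d0"
      by simp_all
    have "(\<lambda>t. b t \<bullet> (xl l t - x t)) integrable_on {t0..tf}" "?lin l integrable_on {t0..tf}"
      by (intro integrable_continuous_interval continuous_intros continuous_b continuous_rho
          xl_continuous[OF l] continuous_x continuous_F_xl[OF l] continuous_F_x continuous_dF_deviation[OF l])+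
    then show ?case
      using integral_unique[OF adjoint_identity[OF l]] integrable_needle_term[OF l]
      by (simp add: integral_add integrable_add)
  qed
  ultimately show ?thesis
    by (rule landau_o.small.in_cong[THEN iffD1, rotated])
qed

context
  fixes ps :: "real^'v \<Rightarrow> real^'n \<Rightarrow> real" and Dps :: "real^'v \<Rightarrow> real^'n \<Rightarrow> real^'n"
    and N :: nat and smp :: "nat \<Rightarrow> real^'v" and p :: "real^'v \<Rightarrow> real"
  assumes C1_ps: "\<And>s. C1 (ps s) (Dps s)" and ps_pos: "\<And>s y. ps s y > 0"
    and b_eq: "\<And>t. t \<in> {t0..tf} \<Longrightarrow> b t = (1 / (tf - t0)) *\<^sub>R
      (\<Sum>i\<in>{1..N}. (p (smp i) / qstat t0 tf ps (xl 0) (smp i)) *\<^sub>R Dps (smp i) (x t))"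
begin

lemma integral_ps_pos: "continuous_on {t0..tf} y \<Longrightarrow> integral {t0..tf} (\<lambda>t. ps s (y t)) > 0"
  using t0_tau tau_tf ps_pos
  by (intro integral_pos_continuous continuous_on_compose2[OF C1_imp_continuous[OF C1_ps]]) auto

lemma integral_ps_xl_zero: "integral {t0..tf} (\<lambda>t. ps s (xl 0 t)) = integral {t0..tf} (\<lambda>t. ps s (x t))"
  by (intro integral_cong) (simp add: xl_zero)

lemma forcing_integral_eq:
  assumes l: "0 \<le> l" "l < d0"
  shows "integral {t0..tf} (\<lambda>t. b t \<bullet> (xl l t - x t)) = (\<Sum>i\<in>{1..N}. p (smp i) *
    (inverse (integral {t0..tf} (\<lambda>t. ps (smp i) (x t)))
      * integral {t0..tf} (\<lambda>t. Dps (smp i) (x t) \<bullet> (xl l t - x t))))"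
proof -
  let ?J = "\<lambda>i. integral {t0..tf} (\<lambda>t. ps (smp i) (x t))"
    and ?c = "\<lambda>i t. Dps (smp i) (x t) \<bullet> (xl l t - x t)"
  have "b t \<bullet> (xl l t - x t) = (\<Sum>i\<in>{1..N}. p (smp i) * inverse (?J i) * ?c i t)"
    if "t \<in> {t0..tf}" for t
  proof -
    have "b t \<bullet> (xl l t - x t) = (\<Sum>i\<in>{1..N}.
        1 / (tf - t0) * (p (smp i) / qstat t0 tf ps (xl 0) (smp i)) * ?c i t)"
      by (simp add: b_eq[OF that] inner_sum_left sum_distrib_left mult.assoc)
    also have "\<dots> = (\<Sum>i\<in>{1..N}. p (smp i) * inverse (?J i) * ?c i t)"
    proof (rule sum.cong[OF refl])
      fix i
      have "qstat t0 tf ps (xl 0) (smp i) = ?J i / (tf - t0)"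
        by (simp add: qstat_def integral_ps_xl_zero)
      then show "1 / (tf - t0) * (p (smp i) / qstat t0 tf ps (xl 0) (smp i)) * ?c i t
          = p (smp i) * inverse (?J i) * ?c i t"
        using integral_ps_pos[OF continuous_x, of "smp i"] t0_tau tau_tf by (simp add: field_simps)
    qed
    finally show ?thesis .
  qed
  then have "integral {t0..tf} (\<lambda>t. b t \<bullet> (xl l t - x t))
      = integral {t0..tf} (\<lambda>t. \<Sum>i\<in>{1..N}. p (smp i) * inverse (?J i) * ?c i t)"
    by (rule integral_cong)
  also have "\<dots> = (\<Sum>i\<in>{1..N}. p (smp i) * inverse (?J i) * integral {t0..tf} (?c i))"
    by (subst integral_sum) (auto intro!: integrable_on_mult_right integrable_continuous_interval
        continuous_intros continuous_on_compose2[OF C1_continuous_gradient[OF C1_ps] continuous_x]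
        xl_continuous[OF l] continuous_x)
  finally show ?thesis
    by (simp add: mult.assoc)
qed

lemma DKL_has_right_derivative:
  "((\<lambda>l. DKL N smp p (qstat t0 tf ps (xl l))) has_real_derivative
    rho tau \<bullet> (P tau (x tau) - F (x tau))) (at_right 0)"
proof -
  let ?J = "\<lambda>i l. integral {t0..tf} (\<lambda>t. ps (smp i) (xl l t))"
    and ?J_x = "\<lambda>i. integral {t0..tf} (\<lambda>t. ps (smp i) (x t))"
    and ?L = "\<lambda>i l. integral {t0..tf} (\<lambda>t. Dps (smp i) (x t) \<bullet> (xl l t - x t))"
    and ?w = "rho tau \<bullet> (P tau (x tau) - F (x tau))"
  have "(\<lambda>l. \<Sum>i\<in>{1..N}. p (smp i) * (ln (?J i l) - ln (?J_x i) - inverse (?J_x i) * ?L i l))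
      \<in> o[at_right 0](\<lambda>l. l)"
    by (rule big_sum_in_smallo) (simp add: ln_integral_expansion[OF C1_ps ps_pos])
  from sum_in_smallo(2)[OF landau_o.small.uminus_in_iff[THEN iffD2, OF this] forcing_integral_expansion]
  have "(\<lambda>l. - (\<Sum>i\<in>{1..N}. p (smp i) * (ln (?J i l) - ln (?J_x i) - inverse (?J_x i) * ?L i l))
      - (integral {t0..tf} (\<lambda>t. b t \<bullet> (xl l t - x t)) + l * ?w)) \<in> o[at_right 0](\<lambda>l. l)" .
  moreover have "\<forall>\<^sub>F l in at_right 0.
      - (\<Sum>i\<in>{1..N}. p (smp i) * (ln (?J i l) - ln (?J_x i) - inverse (?J_x i) * ?L i l))
      - (integral {t0..tf} (\<lambda>t. b t \<bullet> (xl l t - x t)) + l * ?w)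
      = DKL N smp p (qstat t0 tf ps (xl l)) - DKL N smp p (qstat t0 tf ps (xl 0)) - l * ?w"
    using eventually_admissible
  proof eventually_elim
    case (elim l)
    then have l: "0 \<le> l" "l < d0"
      by simp_all
    have "DKL N smp p (qstat t0 tf ps (xl l)) - DKL N smp p (qstat t0 tf ps (xl 0))
        = - (\<Sum>i\<in>{1..N}. p (smp i) * (ln (?J i l) - ln (?J_x i)))"
      using DKL_qstat_diff[of t0 tf N ps smp "xl l" "xl 0" p] t0_tau tau_tf integral_ps_xl_zero
        integral_ps_pos[OF xl_continuous[OF l]] integral_ps_pos[OF continuous_x] by simp
    moreover have "(\<Sum>i\<in>{1..N}. p (smp i) * (ln (?J i l) - ln (?J_x i) - inverse (?J_x i) * ?L i l))
        = (\<Sum>i\<in>{1..N}. p (smp i) * (ln (?J i l) - ln (?J_x i)))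
          - (\<Sum>i\<in>{1..N}. p (smp i) * (inverse (?J_x i) * ?L i l))"
      by (simp add: right_diff_distrib sum_subtractf)
    ultimately show ?case
      using forcing_integral_eq[OF l] by simp
  qed
  ultimately have "(\<lambda>l. DKL N smp p (qstat t0 tf ps (xl l)) - DKL N smp p (qstat t0 tf ps (xl 0)) - l * ?w)
      \<in> o[at_right 0](\<lambda>l. l)"
    by (rule landau_o.small.in_cong[THEN iffD1, rotated])
  then show ?thesis
    by (rule has_real_derivative_at_right_smalloI)
qed

end

end

lemma control_affine_needle_variation:
  fixes g :: "real^'n \<Rightarrow> real^'n" and h :: "real^'n \<Rightarrow> real^'m^'n"
    and f :: "real^'n \<Rightarrow> real^'m \<Rightarrow> real^'n" and mu :: "real^'n \<Rightarrow> real^'m"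
  assumes f_eq: "\<And>y u. f y u = g y + h y *v u"
    and g: "smooth_vec g" and h: "smooth_mat h" and mu: "smooth_vec mu"
    and "continuous_on {t0..tf} mustar" "t0 < tau" "tau < tf" "x t0 = x0"
    and "\<And>t. t \<in> {t0..tf} \<Longrightarrow>
      (x has_vector_derivative f (x t) (mu (x t))) (at t within {t0..tf})"
    and xl: "\<exists>\<delta>>0. \<forall>l. 0 \<le> l \<and> l < \<delta> \<longrightarrow> continuous_on {t0..tf} (xl l) \<and>
      (\<forall>t\<in>{t0..tf}. xl l t = x0 + integral {t0..t}
        (\<lambda>r. if tau \<le> r \<and> r < tau + l then f (xl l r) (mustar r) else f (xl l r) (mu (xl l r))))"
  obtains d0 where "needle_variation (\<lambda>y. f y (mu y)) (\<lambda>j. grad (\<lambda>y. f y (mu y) $ j))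
    (\<lambda>r y. f y (mustar r)) x xl x0 t0 tf tau d0"
proof -
  obtain d0 where "d0 > 0" and xl_d0: "\<And>l. 0 \<le> l \<Longrightarrow> l < d0 \<Longrightarrow> continuous_on {t0..tf} (xl l) \<and>
      (\<forall>t\<in>{t0..tf}. xl l t = x0 + integral {t0..t}
        (\<lambda>r. if tau \<le> r \<and> r < tau + l then f (xl l r) (mustar r) else f (xl l r) (mu (xl l r))))"
    using xl by blast
  have "C1 (\<lambda>y. f y (mu y) $ j) (grad (\<lambda>y. f y (mu y) $ j))" for j
  proof -
    note C1_j = C1_closed_loop[OF f_eq smooth_vec_imp_C1[OF g] smooth_mat_imp_C1[OF h]
        smooth_vec_imp_C1[OF mu], of j]
    show ?thesis
      using C1_j unfolding grad_eq_if_C1[OF C1_j] .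
  qed
  moreover have "continuous_on ({t0..tf} \<times> UNIV) (\<lambda>z. f (snd z) (mustar (fst z)))"
    using g h by (intro continuous_on_control_affine[OF f_eq] C1_imp_continuous[OF smooth_vec_imp_C1]
        C1_imp_continuous[OF smooth_mat_imp_C1] assms(5))
  ultimately show thesis
  proof (intro that, unfold_locales)
    show "continuous_on {t0..tf} (xl l)" if "0 \<le> l" "l < d0" for l
      using xl_d0[OF that] by blast
    show "xl l t = x0 + integral {t0..t}
        (\<lambda>r. if tau \<le> r \<and> r < tau + l then f (xl l r) (mustar r) else f (xl l r) (mu (xl l r)))"
      if "0 \<le> l" "l < d0" "t \<in> {t0..tf}" for l t
      using xl_d0[OF that(1,2)] that(3) by blast
  qed (use \<open>d0 > 0\<close> assms(6-9) in simp_all)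
qed

theorem proposition1:
  fixes g :: "real^'n \<Rightarrow> real^'n"
    and h :: "real^'n \<Rightarrow> real^'m^'n"
    and f :: "real^'n \<Rightarrow> real^'m \<Rightarrow> real^'n"
    and mu :: "real^'n \<Rightarrow> real^'m"
    and mustar :: "real \<Rightarrow> real^'m"
    and proj :: "real^'n \<Rightarrow> real^'v"
    and Sig :: "real^'v^'v"
    and eta :: real
    and p :: "real^'v \<Rightarrow> real"
    and smp :: "nat \<Rightarrow> real^'v"
    and N :: nat
    and t0 tf tau :: real
    and x0 :: "real^'n"
    and x :: "real \<Rightarrow> real^'n"
    and xl :: "real \<Rightarrow> real \<Rightarrow> real^'n"
    and rho :: "real \<Rightarrow> real^'n"
  assumes f_def: "\<And>y u. f y u = g y + h y *v u"
    and g_smooth: "smooth_vec g"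
    and h_smooth: "smooth_mat h"
    and mu_smooth: "smooth_vec mu"
    and proj_lin: "linear proj"
    and Sigma_pd: "pos_def Sig"
    and eta_pos: "eta > 0"
    and p_nonneg: "\<And>s. p s \<ge> 0"
    and times: "t0 < tau" "tau < tf"
    and mustar_cont: "continuous_on {t0..tf} mustar"
    and x_init: "x t0 = x0"
    and x_ode: "\<And>t. t \<in> {t0..tf} \<Longrightarrow>
                  (x has_vector_derivative f (x t) (mu (x t))) (at t within {t0..tf})"
    and xl_sol: "\<exists>\<delta>>0. \<forall>lam. 0 \<le> lam \<and> lam < \<delta> \<longrightarrow>
                   continuous_on {t0..tf} (xl lam) \<and>
                   (\<forall>t\<in>{t0..tf}. xl lam t = x0 + integral {t0..t}
                      (\<lambda>r. if tau \<le> r \<and> r < tau + lam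
                            then f (xl lam r) (mustar r)
                            else f (xl lam r) (mu (xl lam r))))"
    and rho_final: "rho tf = 0"
    and rho_ode: "\<And>t. t \<in> {t0..tf} \<Longrightarrow>
          (rho has_vector_derivative
             ((1 / (tf - t0)) *\<^sub>R
                (\<Sum>i\<in>{1..N}. (p (smp i) / qstat t0 tf (psi eta Sig proj) (xl 0) (smp i))
                    *\<^sub>R grad (psi eta Sig proj (smp i)) (x t))
              - transpose (jacobian (\<lambda>y. f y (mu (x t))) (at (x t))
                  + jacobian (f (x t)) (at (mu (x t))) ** jacobian mu (at (x t))) *v rho t))
          (at t within {t0..tf})"
  shows "((\<lambda>lam. DKL N smp p (qstat t0 tf (psi eta Sig proj) (xl lam)))
           has_real_derivative
             (rho tau \<bullet> (f (x tau) (mustar tau) - f (x tau) (mu (x tau)))))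
         (at_right 0)"
proof -
  let ?F = "\<lambda>y. f y (mu y)" and ?DF = "\<lambda>j. grad (\<lambda>y. f y (mu y) $ j)" and ?ps = "psi eta Sig proj"
  obtain d0 where "needle_variation ?F ?DF (\<lambda>r y. f y (mustar r)) x xl x0 t0 tf tau d0"
    by (rule control_affine_needle_variation[OF f_def g_smooth h_smooth mu_smooth mustar_cont
          times x_init x_ode xl_sol])
  then interpret needle_variation ?F ?DF "\<lambda>r y. f y (mustar r)" x xl x0 t0 tf tau d0 .
  define b where "b t = (1 / (tf - t0)) *\<^sub>R (\<Sum>i\<in>{1..N}.
    (p (smp i) / qstat t0 tf ?ps (xl 0) (smp i)) *\<^sub>R grad (?ps (smp i)) (x t))" for t
  define A where "A t = jacobian (\<lambda>y. f y (mu (x t))) (at (x t))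
    + jacobian (f (x t)) (at (mu (x t))) ** jacobian mu (at (x t))" for t
  have A_apply: "A t *v w = (\<chi> j. ?DF j (x t) \<bullet> w)" for t w
    unfolding A_def closed_loop_jacobian[OF f_def smooth_vec_imp_C1[OF g_smooth]
        smooth_mat_imp_C1[OF h_smooth] smooth_vec_imp_C1[OF mu_smooth]]
    by (rule jacobian_C1_vec[OF C1_F])
  interpret needle_adjoint ?F ?DF "\<lambda>r y. f y (mustar r)" x xl x0 t0 tf tau d0
    rho b "\<lambda>t. b t - transpose (A t) *v rho t"
  proof unfold_locales
    show "(rho has_vector_derivative b t - transpose (A t) *v rho t) (at t within {t0..tf})"
      if "t \<in> {t0..tf}" for t
      using rho_ode[OF that] by (simp add: b_def A_def)
    show "(b t - transpose (A t) *v rho t) \<bullet> w = b t \<bullet> w - rho t \<bullet> (\<chi> j. ?DF j (x t) \<bullet> w)" for t w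
      by (simp add: inner_diff_left dot_lmul_matrix A_apply[symmetric])
    show "continuous_on {t0..tf} b"
      unfolding b_def by (intro continuous_intros
          continuous_on_compose2[OF C1_continuous_gradient[OF C1_psi[OF proj_lin]] continuous_x]) auto
  qed (rule rho_final)
  show ?thesis
    by (rule DKL_has_right_derivative[OF C1_psi[OF proj_lin]]) (simp_all add: psi_def eta_pos b_def)
qed

end
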